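(* Let $\mathcal H_S=\mathbb C^2$, $\hat H_S=0$, $\hat V_S=\hat\sigma_z/2$, $\hat\rho_S$ any qubit density matrix, and $(\hat H_E,\hat V_E,\hat\rho_E)$ any finite-dimensional environment. Then $$e^{it\hat H_S}\mathrm{tr}_E\!\left(e^{-it\hat H_{SE}}\hat\rho_S\otimes\hat\rho_E e^{it\hat H_{SE}}\right)e^{-it\hat H_S}=\sum_{k=0}^\infty(-i)^k\int_0^t\!dt_1\cdots\int_0^{t_{k-1}}\!dt_k\,F^{(k)}(\mathbf t)\,\mathscr V_S(t_1)\circ\cdots\circ\mathscr V_S(t_k)\hat\rho_S,$$ with $$F^{(k)}(\mathbf t)=\sum_{\boldsymbol\xi,\boldsymbol\eta\in\Omega_{\hat V}^{\times k}}\delta_{\xi_1,\eta_1}\Big(\prod_{l=1}^k\frac{\xi_l+\eta_l}{2}\Big)q_E^{(k)}(\boldsymbol\xi\boldsymbol\eta\mathbf t)=\sum_{\boldsymbol\phi\in\Omega_{\{V\}}^{\times k}}\Big(\prod_{l=1}^k\phi_l\Big)f^{(k)}(\boldsymbol\phi\mathbf t),$$ where $f^{(k)}(\boldsymbol\phi\mathbf t)=\big(\prod_{l=1}^k\sum_{\xi_l,\eta_l:\,2\phi_l=\xi_l+\eta_l}\big)\delta_{\xi_1,\eta_1}q_E^{(k)}(\boldsymbol\xi\boldsymbol\eta\mathbf t)$. Moreover the family $\{f^{(k)}\}_{k\ge1}$ satisfies the Chapman–Kolmogorov consistency criterion (summing $f^{(k)}$ over $\phi_l$ gives $f^{(k-1)}$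 with the $l$-th argument removed).
   Context: $\hbar=1$; $\hat\sigma_z=|+\rangle\langle+|-|-\rangle\langle-|$; $\hat H_{SE}=\hat H_S\otimes\hat{\mathds1}+\hat V_S\otimes\hat V_E+\hat{\mathds1}\otimes\hat H_E$. $\mathscr V_S(t)\hat A=\hat V_S(t)\hat A-\hat A\hat V_S(t)$, $\hat V_S(t)=e^{it\hat H_S}\hat V_Se^{-it\hat H_S}$; $k=0$ term is $\hat\rho_S$ (with $F^{(0)}=1$). $\hat V_E=\sum_nv_n|n\rangle\langle n|$, $\Omega_{\hat V}$ its distinct eigenvalues, $\Omega_{\{V\}}=\{(\xi+\eta)/2:\xi,\eta\in\Omega_{\hat V}\}$. $\hat\rho_E(t)=e^{-it\hat H_E}\hat\rho_Ee^{it\hat H_E}$; $T_t(nm|n'm')=\langle n|e^{-it\hat H_E}|n'\rangle\overline{\langle m|e^{-it\hat H_E}|m'\rangle}$; for $t_1>\dots>t_k\ge0$, $$q_E^{(k)}(\boldsymbol\xi\boldsymbol\eta\mathbf t)=\Big(\prod_{l=1}^k\sum_{n_l:\,v_{n_l}=\xi_l}\ \sum_{m_l:\,v_{m_l}=\eta_l}\Big)\delta_{n_1,m_1}\langle n_k|\hat\rho_E(t_k)|m_k\rangle\prod_{l=1}^{k-1}T_{t_l-t_{l+1}}(n_lm_l|n_{l+1}m_{l+1}).$$ *)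

theory Defs
  imports "HOL-Analysis.Analysis"
begin

text \<open>Finite-dimensional operators are represented as complex matrices indexed by a
finite type: an operator on C^'a is a function 'a => 'a => complex (entry (i,j) = <i|A|j>).
The qubit is indexed by bool, with True standing for |+> and False for |->.\<close>

type_synonym 'a cmat = "'a \<Rightarrow> 'a \<Rightarrow> complex"

definition mmult :: "'a::finite cmat \<Rightarrow> 'a cmat \<Rightarrow> 'a cmat" where
  "mmult A B = (\<lambda>i j. \<Sum>k\<in>UNIV. A i k * B k j)"

definition mid :: "'a cmat" where
  "mid = (\<lambda>i j. if i = j then 1 else 0)"

definition msmult :: "complex \<Rightarrow> 'a cmat \<Rightarrow> 'a cmat" where
  "msmult c A = (\<lambda>i j. c * A i j)"

definition madd :: "'a cmat \<Rightarrow> 'a cmat \<Rightarrow> 'a cmat" where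
  "madd A B = (\<lambda>i j. A i j + B i j)"

definition mminus :: "'a cmat \<Rightarrow> 'a cmat \<Rightarrow> 'a cmat" where
  "mminus A B = (\<lambda>i j. A i j - B i j)"

fun mpow :: "'a::finite cmat \<Rightarrow> nat \<Rightarrow> 'a cmat" where
  "mpow A 0 = mid"
| "mpow A (Suc n) = mmult A (mpow A n)"

definition mexp :: "'a::finite cmat \<Rightarrow> 'a cmat" where
  "mexp A = (\<lambda>i j. \<Sum>n. mpow A n i j / of_nat (fact n))"

definition tensor :: "'a cmat \<Rightarrow> 'b cmat \<Rightarrow> ('a \<times> 'b) cmat" where
  "tensor A B = (\<lambda>(a, n) (b, m). A a b * B n m)"

definition ptrace_E :: "('a \<times> 'b::finite) cmat \<Rightarrow> 'a cmat" where
  "ptrace_E M = (\<lambda>a b. \<Sum>n\<in>UNIV. M (a, n) (b, n))"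

definition hermitian :: "'a cmat \<Rightarrow> bool" where
  "hermitian A \<longleftrightarrow> (\<forall>i j. A j i = cnj (A i j))"

definition density_matrix :: "'a::finite cmat \<Rightarrow> bool" where
  "density_matrix A \<longleftrightarrow> hermitian A
     \<and> (\<forall>x::'a \<Rightarrow> complex. 0 \<le> Re (\<Sum>i\<in>UNIV. \<Sum>j\<in>UNIV. cnj (x i) * A i j * x j))
     \<and> (\<Sum>i\<in>UNIV. A i i) = 1"

definition sigma_z :: "bool cmat" where
  "sigma_z = (\<lambda>a b. if a = b then (if a then 1 else -1) else 0)"

definition diag_op :: "('e \<Rightarrow> real) \<Rightarrow> 'e cmat" where
  "diag_op v = (\<lambda>n m. if n = m then complex_of_real (v n) else 0)"

definition H_SE :: "'s cmat \<Rightarrow> 's cmat \<Rightarrow> 'e cmat \<Rightarrow> 'e cmat \<Rightarrow> ('s \<times> 'e) cmat" where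
  "H_SE HS VS VE HE = madd (madd (tensor HS mid) (tensor VS VE)) (tensor mid HE)"

definition reduced_interaction_state ::
  "'s::finite cmat \<Rightarrow> 's cmat \<Rightarrow> 'e::finite cmat \<Rightarrow> 'e cmat \<Rightarrow> 's cmat \<Rightarrow> 'e cmat \<Rightarrow> real \<Rightarrow> 's cmat" where
  "reduced_interaction_state HS VS VE HE rhoS rhoE t =
     (let H = H_SE HS VS VE HE in
      mmult (mmult (mexp (msmult (\<i> * of_real t) HS))
         (ptrace_E (mmult (mmult (mexp (msmult (- \<i> * of_real t) H)) (tensor rhoS rhoE))
                          (mexp (msmult (\<i> * of_real t) H)))))
        (mexp (msmult (- \<i> * of_real t) HS)))"

definition VS_t :: "'s::finite cmat \<Rightarrow> 's cmat \<Rightarrow> real \<Rightarrow> 's cmat" where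
  "VS_t HS VS s = mmult (mmult (mexp (msmult (\<i> * of_real s) HS)) VS) (mexp (msmult (- \<i> * of_real s) HS))"

definition calV :: "'s::finite cmat \<Rightarrow> 's cmat \<Rightarrow> real \<Rightarrow> 's cmat \<Rightarrow> 's cmat" where
  "calV HS VS s A = mminus (mmult (VS_t HS VS s) A) (mmult A (VS_t HS VS s))"

text \<open>vcomp k tau A = calV(tau 1) o calV(tau 2) o ... o calV(tau k) A.\<close>
fun vcomp :: "'s::finite cmat \<Rightarrow> 's cmat \<Rightarrow> nat \<Rightarrow> (nat \<Rightarrow> real) \<Rightarrow> 's cmat \<Rightarrow> 's cmat" where
  "vcomp HS VS 0 tau A = A"
| "vcomp HS VS (Suc k) tau A = vcomp HS VS k tau (calV HS VS (tau (Suc k)) A)"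

text \<open>The full integral int_0^t dt_1 ... int_0^{t_{k-1}} dt_k g(t_1,...,t_k) is nint k 1 t (\<lambda>_. 0) g.\<close>
fun nint :: "nat \<Rightarrow> nat \<Rightarrow> real \<Rightarrow> (nat \<Rightarrow> real) \<Rightarrow> ((nat \<Rightarrow> real) \<Rightarrow> complex) \<Rightarrow> complex" where
  "nint 0 j s tau g = g tau"
| "nint (Suc r) j s tau g = integral {0..s} (\<lambda>u. nint r (Suc j) u (tau(j := u)) g)"

definition U_E :: "'e::finite cmat \<Rightarrow> real \<Rightarrow> 'e cmat" where
  "U_E HE s = mexp (msmult (- \<i> * of_real s) HE)"

definition rhoE_t :: "'e::finite cmat \<Rightarrow> 'e cmat \<Rightarrow> real \<Rightarrow> 'e cmat" where
  "rhoE_t HE rhoE s = mmult (mmult (U_E HE s) rhoE) (mexp (msmult (\<i> * of_real s) HE))"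

definition T_E :: "'e::finite cmat \<Rightarrow> real \<Rightarrow> 'e \<Rightarrow> 'e \<Rightarrow> 'e \<Rightarrow> 'e \<Rightarrow> complex" where
  "T_E HE s n m n' m' = U_E HE s n n' * cnj (U_E HE s m m')"

definition Omega_V :: "('e \<Rightarrow> real) \<Rightarrow> real set" where
  "Omega_V v = range v"

definition Omega_VV :: "('e \<Rightarrow> real) \<Rightarrow> real set" where
  "Omega_VV v = {(x + y) / 2 | x y. x \<in> Omega_V v \<and> y \<in> Omega_V v}"

text \<open>Tuples (indexed by 1..k) are functions nat => _ restricted to {1..k}.\<close>
definition ktuples :: "nat \<Rightarrow> 'a set \<Rightarrow> (nat \<Rightarrow> 'a) set" where
  "ktuples k A = PiE {1..k} (\<lambda>_. A)"

definition fibre_idx :: "('e \<Rightarrow> real) \<Rightarrow> nat \<Rightarrow> (nat \<Rightarrow> real) \<Rightarrow> (nat \<Rightarrow> 'e) set" where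
  "fibre_idx v k xi = {n \<in> ktuples k UNIV. \<forall>l\<in>{1..k}. v (n l) = xi l}"

definition q_E :: "'e::finite cmat \<Rightarrow> ('e \<Rightarrow> real) \<Rightarrow> 'e cmat \<Rightarrow> nat \<Rightarrow>
    (nat \<Rightarrow> real) \<Rightarrow> (nat \<Rightarrow> real) \<Rightarrow> (nat \<Rightarrow> real) \<Rightarrow> complex" where
  "q_E HE v rhoE k xi eta tau =
     (\<Sum>n\<in>fibre_idx v k xi. \<Sum>m\<in>fibre_idx v k eta.
        (if n 1 = m 1 then 1 else 0) * rhoE_t HE rhoE (tau k) (n k) (m k)
        * (\<Prod>l\<in>{1..<k}. T_E HE (tau l - tau (Suc l)) (n l) (m l) (n (Suc l)) (m (Suc l))))"

fun F_k :: "'e::finite cmat \<Rightarrow> ('e \<Rightarrow> real) \<Rightarrow> 'e cmat \<Rightarrow> nat \<Rightarrow> (nat \<Rightarrow> real) \<Rightarrow> complex" where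
  "F_k HE v rhoE 0 tau = 1"
| "F_k HE v rhoE (Suc k) tau =
     (\<Sum>xi\<in>ktuples (Suc k) (Omega_V v). \<Sum>eta\<in>ktuples (Suc k) (Omega_V v).
        (if xi 1 = eta 1 then 1 else 0)
        * complex_of_real (\<Prod>l\<in>{1..Suc k}. (xi l + eta l) / 2)
        * q_E HE v rhoE (Suc k) xi eta tau)"

definition f_k :: "'e::finite cmat \<Rightarrow> ('e \<Rightarrow> real) \<Rightarrow> 'e cmat \<Rightarrow> nat \<Rightarrow> (nat \<Rightarrow> real) \<Rightarrow> (nat \<Rightarrow> real) \<Rightarrow> complex" where
  "f_k HE v rhoE k phi tau =
     (\<Sum>(xi, eta)\<in>{(xi, eta) \<in> ktuples k (Omega_V v) \<times> ktuples k (Omega_V v).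
                      \<forall>l\<in>{1..k}. 2 * phi l = xi l + eta l}.
        (if xi 1 = eta 1 then 1 else 0) * q_E HE v rhoE k xi eta tau)"

definition time_ordered :: "nat \<Rightarrow> (nat \<Rightarrow> real) \<Rightarrow> bool" where
  "time_ordered k tau \<longleftrightarrow> (\<forall>l\<in>{1..<k}. tau (Suc l) < tau l) \<and> 0 \<le> tau k"

definition skip_idx :: "nat \<Rightarrow> (nat \<Rightarrow> 'a) \<Rightarrow> nat \<Rightarrow> 'a" where
  "skip_idx l g = (\<lambda>i. if i < l then g i else g (Suc i))"

end

theory Submission
  imports Defs
begin

text \<open>
Since H_S = 0 and V_S = sigma_z/2, the total Hamiltonian is block diagonal: on the qubit branch
a it acts on the environment as H_a = s_a V_E + H_E with s_+ = 1/2, s_- = -1/2.  Hence the (a,b)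
entry of the reduced state is rho_S(a,b) tr(e^{-itH_a} rho_E e^{itH_b}), while each superoperator
calV_S(t) multiplies that entry by s_a - s_b, so on the diagonal only the term k = 0 survives.
Off the diagonal, the Liouvillian X \<mapsto> -i(H_a X - X H_b) is the free environment Liouvillian
plus the Hadamard multiplier X_nm \<mapsto> -i s_a (v_n + v_m) X_nm.  The Dyson series of its exponential
in the Banach algebra of superoperators, traced against rho_E, produces the nested integrals of
F^(k): once the traces are resolved, F^(k) is an environment correlation function with weights
(v_n + v_m)/2 at the k interaction times.

The same correlation function with indicator weights [2 phi_l = v_n + v_m] is f^(k).  Grouping
the pairs (xi, eta) by their half sums gives the decomposition of F^(k).  Summing the l-th
indicator over Omega_{V} yields the unit weight, at which the two adjacent free propagators merge
by the group law e^{-isH_E} e^{-iuH_E} = e^{-i(s+u)H_E}; this is the consistency criterion.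
\<close>

section \<open>Square complex matrices as a Banach algebra\<close>

lemma mmult_assoc: "mmult (mmult A B) C = mmult A (mmult (B::'a::finite cmat) C)"
  unfolding mmult_def
  by (auto simp: sum_distrib_left sum_distrib_right mult.assoc intro!: ext sum.swap[THEN trans])

lemma mmult_mid_left[simp]: "mmult mid A = (A::'a::finite cmat)"
  unfolding mmult_def mid_def by (simp add: fun_eq_iff if_distrib[of "\<lambda>x. x * _"] cong: if_cong)

lemma mmult_mid_right[simp]: "mmult A mid = (A::'a::finite cmat)"
  unfolding mmult_def mid_def by (simp add: fun_eq_iff if_distrib[of "\<lambda>x. _ * x"] cong: if_cong)

typedef 'n cmatrix = "UNIV :: 'n cmat set" morphisms entry of_cmat by auto

setup_lifting type_definition_cmatrix

lemma cmatrix_eqI: "(\<And>i j. entry x i j = entry y i j) \<Longrightarrow> x = y"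
  by (metis entry_inject ext)

lemma entry_of_cmat[simp]: "entry (of_cmat A) = A"
  by (simp add: of_cmat_inverse)

instantiation cmatrix :: (finite) ring_1
begin
lift_definition zero_cmatrix :: "'a cmatrix" is "\<lambda>i j. 0" .
lift_definition one_cmatrix :: "'a cmatrix" is "mid" .
lift_definition plus_cmatrix :: "'a cmatrix \<Rightarrow> 'a cmatrix \<Rightarrow> 'a cmatrix" is madd .
lift_definition minus_cmatrix :: "'a cmatrix \<Rightarrow> 'a cmatrix \<Rightarrow> 'a cmatrix" is mminus .
lift_definition uminus_cmatrix :: "'a cmatrix \<Rightarrow> 'a cmatrix" is "\<lambda>A i j. - A i j" .
lift_definition times_cmatrix :: "'a cmatrix \<Rightarrow> 'a cmatrix \<Rightarrow> 'a cmatrix" is mmult .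
instance
proof
  fix a b c :: "'a cmatrix"
  show "a * b * c = a * (b * c)"
    by transfer (rule mmult_assoc)
  show "a + b + c = a + (b + c)" by transfer (simp add: madd_def algebra_simps)
  show "a + b = b + a" by transfer (simp add: madd_def add.commute)
  show "0 + a = a" by transfer (simp add: madd_def algebra_simps)
  show "- a + a = 0" by transfer (simp add: madd_def algebra_simps)
  show "a - b = a + - b" by transfer (simp add: madd_def mminus_def)
  show "1 * a = a" by transfer simp
  show "a * 1 = a" by transfer simp
  show "(a + b) * c = a * c + b * c" by transfer (simp add: mmult_def madd_def distrib_right sum.distrib)
  show "a * (b + c) = a * b + a * c" by transfer (simp add: mmult_def madd_def distrib_left sum.distrib)
  show "(0::'a cmatrix) \<noteq> 1" by transfer (auto simp: mid_def fun_eq_iff)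
qed
end

text \<open>The maximal column sum norm is submultiplicative, so the matrices form a Banach algebra and
the library exponential \<open>exp\<close> applies to them.\<close>

definition col_norm :: "'a::finite cmat \<Rightarrow> 'a \<Rightarrow> real" where
  "col_norm A j = (\<Sum>i\<in>UNIV. cmod (A i j))"

definition mnorm :: "'a::finite cmat \<Rightarrow> real" where
  "mnorm A = Max (range (col_norm A))"

lemma col_norm_le_mnorm: "col_norm A j \<le> mnorm A"
  unfolding mnorm_def by (rule Max_ge) auto

lemma mnorm_attained: "\<exists>j. mnorm A = col_norm A j"
proof -
  have "mnorm A \<in> range (col_norm A)" unfolding mnorm_def by (rule Max_in) auto
  then show ?thesis by auto
qed

lemma mnorm_le: "(\<And>j. col_norm A j \<le> c) \<Longrightarrow> mnorm A \<le> c"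
  using mnorm_attained by metis

lemma col_norm_nonneg: "0 \<le> col_norm A j"
  unfolding col_norm_def by (simp add: sum_nonneg)

lemma mnorm_nonneg: "0 \<le> mnorm A"
  using col_norm_le_mnorm[of A] col_norm_nonneg[of A] by (meson order_trans)

lemma entry_le_col_norm: "cmod (A i j) \<le> col_norm A j"
  unfolding col_norm_def by (rule member_le_sum) auto

lemma entry_le_mnorm: "cmod (A i j) \<le> mnorm A"
  using entry_le_col_norm col_norm_le_mnorm order_trans by metis

lemma mnorm_le_sum: "mnorm A \<le> (\<Sum>i\<in>UNIV. \<Sum>j\<in>UNIV. cmod (A i j))"
proof (rule mnorm_le)
  fix j
  show "col_norm A j \<le> (\<Sum>i\<in>UNIV. \<Sum>j\<in>UNIV. cmod (A i j))"
    unfolding col_norm_def by (intro sum_mono member_le_sum) auto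
qed

lemma mnorm_zero_iff: "mnorm A = 0 \<longleftrightarrow> A = (\<lambda>i j. 0)"
proof
  assume "mnorm A = 0"
  then have "cmod (A i j) \<le> 0" for i j using entry_le_mnorm[of A i j] by simp
  then show "A = (\<lambda>i j. 0)" by (auto simp: fun_eq_iff)
next
  assume "A = (\<lambda>i j. 0)"
  then show "mnorm A = 0" unfolding mnorm_def col_norm_def by simp
qed

lemma mnorm_triangle: "mnorm (madd A B) \<le> mnorm A + mnorm B"
proof (rule mnorm_le)
  fix j
  have "col_norm (madd A B) j \<le> col_norm A j + col_norm B j"
    unfolding col_norm_def madd_def sum.distrib[symmetric] by (intro sum_mono norm_triangle_ineq)
  also have "\<dots> \<le> mnorm A + mnorm B" by (intro add_mono col_norm_le_mnorm)
  finally show "col_norm (madd A B) j \<le> mnorm A + mnorm B" .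
qed

lemma mnorm_scale: "mnorm (\<lambda>i j. r *\<^sub>R A i j) = \<bar>r\<bar> * mnorm A"
proof -
  have cs: "col_norm (\<lambda>i j. r *\<^sub>R A i j) j = \<bar>r\<bar> * col_norm A j" for j
    unfolding col_norm_def by (simp add: sum_distrib_left)
  show ?thesis
  proof (rule antisym)
    show "mnorm (\<lambda>i j. r *\<^sub>R A i j) \<le> \<bar>r\<bar> * mnorm A"
      by (rule mnorm_le) (simp add: cs col_norm_le_mnorm mult_left_mono)
    obtain j where "mnorm A = col_norm A j" using mnorm_attained by blast
    then show "\<bar>r\<bar> * mnorm A \<le> mnorm (\<lambda>i j. r *\<^sub>R A i j)"
      using col_norm_le_mnorm[of "\<lambda>i j. r *\<^sub>R A i j" j] by (simp add: cs)
  qed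
qed

lemma mnorm_mult: "mnorm (mmult A B) \<le> mnorm A * mnorm B"
proof (rule mnorm_le)
  fix j
  have "col_norm (mmult A B) j \<le> (\<Sum>i\<in>UNIV. \<Sum>k\<in>UNIV. cmod (A i k) * cmod (B k j))"
    unfolding col_norm_def mmult_def
    by (intro sum_mono order_trans[OF norm_sum]) (simp add: norm_mult)
  also have "\<dots> = (\<Sum>k\<in>UNIV. col_norm A k * cmod (B k j))"
    unfolding col_norm_def by (subst sum.swap) (simp add: sum_distrib_right)
  also have "\<dots> \<le> (\<Sum>k\<in>UNIV. mnorm A * cmod (B k j))"
    by (intro sum_mono mult_right_mono col_norm_le_mnorm) auto
  also have "\<dots> = mnorm A * col_norm B j"
    unfolding col_norm_def by (simp add: sum_distrib_left)
  also have "\<dots> \<le> mnorm A * mnorm B"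
    by (intro mult_left_mono col_norm_le_mnorm mnorm_nonneg)
  finally show "col_norm (mmult A B) j \<le> mnorm A * mnorm B" .
qed

lemma mnorm_mid: "mnorm (mid :: 'a::finite cmat) = 1"
proof -
  have "col_norm (mid :: 'a cmat) j = 1" for j
    unfolding col_norm_def mid_def by (simp add: if_distrib[of cmod] cong: if_cong)
  then show ?thesis unfolding mnorm_def by simp
qed

instantiation cmatrix :: (finite) real_algebra_1
begin
lift_definition scaleR_cmatrix :: "real \<Rightarrow> 'a cmatrix \<Rightarrow> 'a cmatrix" is "\<lambda>r A i j. r *\<^sub>R A i j" .
instance
proof
  fix a b :: real and x y :: "'a cmatrix"
  show "a *\<^sub>R (x + y) = a *\<^sub>R x + a *\<^sub>R y" by transfer (simp add: madd_def algebra_simps)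
  show "(a + b) *\<^sub>R x = a *\<^sub>R x + b *\<^sub>R x" by transfer (simp add: madd_def algebra_simps)
  show "a *\<^sub>R b *\<^sub>R x = (a * b) *\<^sub>R x" by transfer simp
  show "1 *\<^sub>R x = x" by transfer simp
  show "a *\<^sub>R x * y = a *\<^sub>R (x * y)" by transfer (simp add: mmult_def scaleR_sum_right)
  show "x * a *\<^sub>R y = a *\<^sub>R (x * y)" by transfer (simp add: mmult_def scaleR_sum_right)
qed
end

instantiation cmatrix :: (finite) real_normed_algebra_1
begin
lift_definition norm_cmatrix :: "'a cmatrix \<Rightarrow> real" is mnorm .
definition sgn_cmatrix :: "'a cmatrix \<Rightarrow> 'a cmatrix" where "sgn_cmatrix x = x /\<^sub>R norm x"
definition dist_cmatrix :: "'a cmatrix \<Rightarrow> 'a cmatrix \<Rightarrow> real" where "dist_cmatrix x y = norm (x - y)"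
definition uniformity_cmatrix :: "('a cmatrix \<times> 'a cmatrix) filter" where
  "uniformity_cmatrix = (INF e\<in>{0 <..}. principal {(x, y). dist x y < e})"
definition open_cmatrix :: "'a cmatrix set \<Rightarrow> bool" where
  "open_cmatrix U \<longleftrightarrow> (\<forall>x\<in>U. eventually (\<lambda>(x', y). x' = x \<longrightarrow> y \<in> U) uniformity)"
instance
proof
  fix a b :: real and x y :: "'a cmatrix"
  show "sgn x = x /\<^sub>R norm x" by (rule sgn_cmatrix_def)
  show "dist x y = norm (x - y)" by (rule dist_cmatrix_def)
  show "(uniformity :: ('a cmatrix \<times> 'a cmatrix) filter) = (INF e\<in>{0 <..}. principal {(x, y). dist x y < e})"
    by (rule uniformity_cmatrix_def)
  show "norm x = 0 \<longleftrightarrow> x = 0" by transfer (rule mnorm_zero_iff)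
  show "norm (x + y) \<le> norm x + norm y" by transfer (rule mnorm_triangle)
  show "norm (a *\<^sub>R x) = \<bar>a\<bar> * norm x" by transfer (rule mnorm_scale)
  show "norm (x * y) \<le> norm x * norm y" by transfer (rule mnorm_mult)
  show "norm (1 :: 'a cmatrix) = 1" by transfer (rule mnorm_mid)
qed (rule open_cmatrix_def)
end

lemma norm_entry_le: "cmod (entry x i j) \<le> norm x"
  by transfer (rule entry_le_mnorm)

lemma norm_le_sum_norm_entries: "norm x \<le> (\<Sum>i\<in>UNIV. \<Sum>j\<in>UNIV. cmod (entry x i j))"
  by transfer (rule mnorm_le_sum)

lemma entry_add[simp]: "entry (x + y) i j = entry x i j + entry y i j" by transfer (simp add: madd_def)
lemma entry_diff[simp]: "entry (x - y) i j = entry x i j - entry y i j" by transfer (simp add: mminus_def)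
lemma entry_uminus[simp]: "entry (- x) i j = - entry x i j" by transfer simp
lemma entry_zero[simp]: "entry 0 i j = 0" by transfer simp
lemma entry_scaleR[simp]: "entry (r *\<^sub>R x) i j = r *\<^sub>R entry x i j" by transfer simp
lemma entry_mult: "entry (x * y) = mmult (entry x) (entry y)" by transfer simp
lemma entry_one: "entry 1 = mid" by transfer simp

lemma entry_sum: "entry (sum f S) i j = (\<Sum>k\<in>S. entry (f k) i j)"
  by (induction S rule: infinite_finite_induct) auto

lemma entry_power: "entry (x ^ n) = mpow (entry x) n"
  by (induction n) (auto simp: entry_one entry_mult)

instance cmatrix :: (finite) banach
proof
  fix X :: "nat \<Rightarrow> 'a cmatrix"
  assume X: "Cauchy X"
  have "Cauchy (\<lambda>n. entry (X n) i j)" for i j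
  proof (rule CauchyI)
    fix e :: real assume "0 < e"
    then obtain M where "\<forall>m\<ge>M. \<forall>n\<ge>M. norm (X m - X n) < e" using X CauchyD by blast
    then show "\<exists>M. \<forall>m\<ge>M. \<forall>n\<ge>M. norm (entry (X m) i j - entry (X n) i j) < e"
      using norm_entry_le[of "X _ - X _" i j] by (metis entry_diff order_le_less_trans)
  qed
  then have lim_entry: "(\<lambda>n. entry (X n) i j) \<longlonglongrightarrow> lim (\<lambda>n. entry (X n) i j)" for i j
    using Cauchy_convergent convergent_LIMSEQ_iff by blast
  define Y where "Y = of_cmat (\<lambda>i j. lim (\<lambda>n. entry (X n) i j))"
  have "(\<lambda>n. cmod (entry (X n - Y) i j)) \<longlonglongrightarrow> 0" for i j
    using LIM_zero[OF lim_entry] by (simp add: Y_def tendsto_norm_zero_iff)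
  then have "(\<lambda>n. \<Sum>i\<in>UNIV. \<Sum>j\<in>UNIV. cmod (entry (X n - Y) i j)) \<longlonglongrightarrow> 0"
    using tendsto_sum[of UNIV "\<lambda>i n. \<Sum>j\<in>UNIV. cmod (entry (X n - Y) i j)" "\<lambda>_. 0"]
      tendsto_sum[of UNIV "\<lambda>j n. cmod (entry (X n - Y) _ j)" "\<lambda>_. 0"] by simp
  then have "(\<lambda>n. X n - Y) \<longlonglongrightarrow> 0"
    by (rule Lim_null_comparison[OF always_eventually, OF allI, OF norm_le_sum_norm_entries])
  then show "convergent X"
    by (auto simp: LIM_zero_iff intro: convergentI)
qed

lemma sum_sum_delta:
  fixes f :: "'n::finite \<Rightarrow> 'm::finite \<Rightarrow> 'c::comm_monoid_add"
  shows "(\<Sum>i\<in>UNIV. \<Sum>j\<in>UNIV. if a = i \<and> b = j then f i j else 0) = f a b"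
proof -
  have "(\<Sum>j\<in>UNIV. if a = i \<and> b = j then f i j else 0) = (if a = i then f i b else 0)" for i
    by (cases "a = i") simp_all
  then show ?thesis by simp
qed

definition unit_cmatrix :: "'n \<Rightarrow> 'n \<Rightarrow> complex \<Rightarrow> 'n cmatrix" where
  "unit_cmatrix i j c = of_cmat (\<lambda>a b. if a = i \<and> b = j then c else 0)"

lemma cmatrix_decomp:
  fixes x :: "'n::finite cmatrix"
  shows "x = (\<Sum>i\<in>UNIV. \<Sum>j\<in>UNIV. Re (entry x i j) *\<^sub>R unit_cmatrix i j 1 + Im (entry x i j) *\<^sub>R unit_cmatrix i j \<i>)"
proof (rule cmatrix_eqI)
  fix a b
  have "entry (\<Sum>i\<in>UNIV. \<Sum>j\<in>UNIV. Re (entry x i j) *\<^sub>R unit_cmatrix i j 1 + Im (entry x i j) *\<^sub>R unit_cmatrix i j \<i>) a b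
     = (\<Sum>i\<in>UNIV. \<Sum>j\<in>UNIV. if a = i \<and> b = j then Re (entry x i j) *\<^sub>R 1 + Im (entry x i j) *\<^sub>R \<i> else 0)"
    by (simp add: entry_sum unit_cmatrix_def) (intro sum.cong refl; simp)
  also have "\<dots> = Re (entry x a b) *\<^sub>R 1 + Im (entry x a b) *\<^sub>R \<i>"
    by (rule sum_sum_delta)
  also have "\<dots> = entry x a b" by (simp add: complex_eq_iff)
  finally show "entry x a b = entry (\<Sum>i\<in>UNIV. \<Sum>j\<in>UNIV. Re (entry x i j) *\<^sub>R unit_cmatrix i j 1 + Im (entry x i j) *\<^sub>R unit_cmatrix i j \<i>) a b" ..
qed

lemma linear_imp_bounded_linear_cmatrix:
  fixes h :: "'n::finite cmatrix \<Rightarrow> 'b::real_normed_vector"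
  assumes lin: "linear h"
  shows "bounded_linear h"
proof -
  define K where "K = (\<Sum>i\<in>(UNIV::'n set). \<Sum>j\<in>(UNIV::'n set). norm (h (unit_cmatrix i j 1)) + norm (h (unit_cmatrix i j \<i>)))"
  show ?thesis
  proof (rule bounded_linear_intro[where K=K])
    fix x y :: "'n cmatrix" and r :: real
    show "h (x + y) = h x + h y" by (rule linear_add[OF lin])
    show "h (r *\<^sub>R x) = r *\<^sub>R h x" by (rule linear_scale[OF lin])
    let ?f = "\<lambda>i j. Re (entry x i j) *\<^sub>R h (unit_cmatrix i j 1) + Im (entry x i j) *\<^sub>R h (unit_cmatrix i j \<i>)"
    have "h x = h (\<Sum>i\<in>UNIV. \<Sum>j\<in>UNIV. Re (entry x i j) *\<^sub>R unit_cmatrix i j 1 + Im (entry x i j) *\<^sub>R unit_cmatrix i j \<i>)"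
      by (rule arg_cong[OF cmatrix_decomp])
    also have "\<dots> = (\<Sum>i\<in>UNIV. \<Sum>j\<in>UNIV. ?f i j)"
      by (simp only: linear_sum[OF lin] linear_add[OF lin] linear_scale[OF lin] o_def)
    finally have hx: "h x = (\<Sum>i\<in>UNIV. \<Sum>j\<in>UNIV. ?f i j)" .
    have "norm (h x) \<le> (\<Sum>i\<in>UNIV. norm (\<Sum>j\<in>UNIV. ?f i j))"
      unfolding hx by (rule norm_sum)
    also have "\<dots> \<le> (\<Sum>i\<in>UNIV. \<Sum>j\<in>UNIV. norm (?f i j))"
      by (intro sum_mono norm_sum)
    also have "\<dots> \<le> (\<Sum>i\<in>UNIV. \<Sum>j\<in>UNIV. norm x * (norm (h (unit_cmatrix i j 1)) + norm (h (unit_cmatrix i j \<i>))))"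
    proof (intro sum_mono)
      fix i j
      have r: "\<bar>Re (entry x i j)\<bar> \<le> norm x" and m: "\<bar>Im (entry x i j)\<bar> \<le> norm x"
        using norm_entry_le[of x i j] abs_Re_le_cmod[of "entry x i j"] abs_Im_le_cmod[of "entry x i j"] by linarith+
      have "norm (?f i j) \<le> norm (Re (entry x i j) *\<^sub>R h (unit_cmatrix i j 1)) + norm (Im (entry x i j) *\<^sub>R h (unit_cmatrix i j \<i>))"
        by (rule norm_triangle_ineq)
      also have "\<dots> = \<bar>Re (entry x i j)\<bar> * norm (h (unit_cmatrix i j 1)) + \<bar>Im (entry x i j)\<bar> * norm (h (unit_cmatrix i j \<i>))"
        by simp
      also have "\<dots> \<le> norm x * norm (h (unit_cmatrix i j 1)) + norm x * norm (h (unit_cmatrix i j \<i>))"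
        by (intro add_mono mult_right_mono r m norm_ge_zero)
      finally show "norm (?f i j) \<le> norm x * (norm (h (unit_cmatrix i j 1)) + norm (h (unit_cmatrix i j \<i>)))"
        by (simp only: distrib_left)
    qed
    also have "\<dots> = norm x * K" unfolding K_def by (simp only: sum_distrib_left)
    finally show "norm (h x) \<le> norm x * K" .
  qed
qed

lemma bounded_linear_exp_hom:
  fixes h :: "'a::{real_normed_algebra_1,banach} \<Rightarrow> 'b::{real_normed_algebra_1,banach}"
  assumes h: "bounded_linear h" and p: "\<And>n. h (x ^ n) = (h x) ^ n"
  shows "h (exp x) = exp (h x)"
proof -
  have "(\<lambda>n. x ^ n /\<^sub>R fact n) sums exp x" by (rule exp_converges)
  then have "(\<lambda>n. h (x ^ n /\<^sub>R fact n)) sums h (exp x)" by (rule bounded_linear.sums[OF h])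
  moreover have "h (x ^ n /\<^sub>R fact n) = (h x) ^ n /\<^sub>R fact n" for n
    by (simp add: p linear_scale[OF bounded_linear.linear[OF h]])
  ultimately have "(\<lambda>n. (h x) ^ n /\<^sub>R fact n) sums h (exp x)" by simp
  moreover have "(\<lambda>n. (h x) ^ n /\<^sub>R fact n) sums exp (h x)" by (rule exp_converges)
  ultimately show ?thesis using sums_unique2 by blast
qed

lemma linear_entry: "linear (\<lambda>x::'n::finite cmatrix. entry x i j)"
  by (rule linearI) auto

lemma mexp_eq_exp: "mexp (A :: 'n::finite cmat) = entry (exp (of_cmat A))"
proof (intro ext)
  fix i j
  have bl: "bounded_linear (\<lambda>x::'n cmatrix. entry x i j)" by (intro linear_imp_bounded_linear_cmatrix linear_entry)
  have "(\<lambda>n. of_cmat A ^ n /\<^sub>R fact n) sums exp (of_cmat A)" by (rule exp_converges)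
  then have "(\<lambda>n. entry (of_cmat A ^ n /\<^sub>R fact n) i j) sums entry (exp (of_cmat A)) i j"
    by (rule bounded_linear.sums[OF bl])
  moreover have "entry (of_cmat A ^ n /\<^sub>R fact n) i j = mpow A n i j / of_nat (fact n)" for n
    by (simp only: entry_scaleR entry_power entry_of_cmat) (simp add: scaleR_conv_of_real divide_inverse mult.commute)
  ultimately have "(\<lambda>n. mpow A n i j / of_nat (fact n)) sums entry (exp (of_cmat A)) i j" by simp
  then show "mexp A i j = entry (exp (of_cmat A)) i j" unfolding mexp_def by (simp add: sums_iff)
qed

section \<open>The Dyson series in a Banach algebra\<close>

text \<open>For a free generator a and a perturbation b, int_propagator a b t = e^{-ta} e^{t(a+b)}
solves W' = b(t) W with b(t) = e^{-ta} b e^{ta} = interaction_op a b t, and dyson_term a b k t is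
the integral of b(t_1) ... b(t_k) over t \<ge> t_1 \<ge> ... \<ge> t_k \<ge> 0.\<close>

definition interaction_op :: "'a::{real_normed_algebra_1,banach} \<Rightarrow> 'a \<Rightarrow> real \<Rightarrow> 'a" where
  "interaction_op a b s = exp (s *\<^sub>R (-a)) * b * exp (s *\<^sub>R a)"

fun dyson_term :: "'a::{real_normed_algebra_1,banach} \<Rightarrow> 'a \<Rightarrow> nat \<Rightarrow> real \<Rightarrow> 'a" where
  "dyson_term a b 0 t = 1"
| "dyson_term a b (Suc k) t = integral {0..t} (\<lambda>s. interaction_op a b s * dyson_term a b k s)"

definition int_propagator :: "'a::{real_normed_algebra_1,banach} \<Rightarrow> 'a \<Rightarrow> real \<Rightarrow> 'a" where
  "int_propagator a b t = exp (t *\<^sub>R (-a)) * exp (t *\<^sub>R (a + b))"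

definition dyson_remainder :: "'a::{real_normed_algebra_1,banach} \<Rightarrow> 'a \<Rightarrow> nat \<Rightarrow> real \<Rightarrow> 'a" where
  "dyson_remainder a b n t = int_propagator a b t - (\<Sum>k<n. dyson_term a b k t)"

lemma exp_scaleR_mult_exp_scaleR_minus:
  "exp (t *\<^sub>R a) * exp (t *\<^sub>R (-a)) = (1::'a::{real_normed_algebra_1,banach})"
  using exp_minus_inverse[of "t *\<^sub>R a"] by simp

lemma continuous_on_exp_scaleR:
  "continuous_on S (\<lambda>s::real. exp (s *\<^sub>R (a::'a::{real_normed_algebra_1,banach})))"
  using has_vector_derivative_continuous[OF exp_scaleR_has_vector_derivative_right]
  by (auto simp: continuous_on_eq_continuous_within)

lemma continuous_on_interaction_op: "continuous_on S (interaction_op a b)"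
  unfolding interaction_op_def by (intro continuous_on_mult continuous_on_exp_scaleR continuous_on_const)

lemma continuous_on_int_propagator: "continuous_on S (int_propagator a b)"
  unfolding int_propagator_def by (intro continuous_on_mult continuous_on_exp_scaleR)

lemma integrable_interaction_op_mult:
  assumes "continuous_on {0..t} f"
  shows "(\<lambda>s. interaction_op a b s * f s) integrable_on {0..t}"
  by (intro integrable_continuous_interval continuous_on_mult continuous_on_interaction_op assms)

lemma continuous_on_dyson_term: "continuous_on {0..T} (dyson_term a b k)"
proof (induction k)
  case 0
  then show ?case by simp
next
  case (Suc k)
  have g: "continuous_on {0..T} (\<lambda>s. interaction_op a b s * dyson_term a b k s)"
    by (intro continuous_on_mult continuous_on_interaction_op Suc)
  have "continuous (at x within {0..T}) (\<lambda>u. integral {0..u} (\<lambda>s. interaction_op a b s * dyson_term a b k s))"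
    if "x \<in> {0..T}" for x
    by (rule has_vector_derivative_continuous[OF integral_has_vector_derivative[OF g that]])
  then show ?case by (simp add: continuous_on_eq_continuous_within)
qed

lemma continuous_on_dyson_remainder: "continuous_on {0..T} (dyson_remainder a b n)"
  unfolding dyson_remainder_def
  by (intro continuous_on_diff continuous_on_int_propagator continuous_on_sum continuous_on_dyson_term)

lemma int_propagator_has_vector_derivative:
  "(int_propagator a b has_vector_derivative (interaction_op a b t * int_propagator a b t)) (at t within S)"
proof -
  have "(int_propagator a b has_vector_derivative
     exp (t *\<^sub>R (-a)) * ((a + b) * exp (t *\<^sub>R (a + b))) + exp (t *\<^sub>R (-a)) * (-a) * exp (t *\<^sub>R (a + b)))
     (at t within S)"
    unfolding int_propagator_def
    by (intro has_vector_derivative_mult exp_scaleR_has_vector_derivative_right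
        has_vector_derivative_at_within[OF exp_scaleR_has_vector_derivative_left])
  also have "exp (t *\<^sub>R (-a)) * ((a + b) * exp (t *\<^sub>R (a + b))) + exp (t *\<^sub>R (-a)) * (-a) * exp (t *\<^sub>R (a + b))
      = exp (t *\<^sub>R (-a)) * b * exp (t *\<^sub>R (a + b))"
    by (simp add: algebra_simps)
  also have "\<dots> = exp (t *\<^sub>R (-a)) * b * (exp (t *\<^sub>R a) * exp (t *\<^sub>R (-a))) * exp (t *\<^sub>R (a + b))"
    by (simp only: exp_scaleR_mult_exp_scaleR_minus mult_1_right)
  also have "\<dots> = interaction_op a b t * int_propagator a b t"
    unfolding interaction_op_def int_propagator_def by (simp only: mult.assoc)
  finally show ?thesis .
qed

lemma int_propagator_has_integral:
  assumes "0 \<le> t"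
  shows "((\<lambda>s. interaction_op a b s * int_propagator a b s) has_integral (int_propagator a b t - 1)) {0..t}"
  using fundamental_theorem_of_calculus[OF assms int_propagator_has_vector_derivative]
  by (simp add: int_propagator_def)

lemma dyson_remainder_Suc:
  assumes "0 \<le> t"
  shows "dyson_remainder a b (Suc n) t = integral {0..t} (\<lambda>s. interaction_op a b s * dyson_remainder a b n s)"
proof -
  let ?i = "\<lambda>f. integral {0..t} (\<lambda>s. interaction_op a b s * f s)"
  have "?i (dyson_remainder a b n)
      = ?i (int_propagator a b) - integral {0..t} (\<lambda>s. \<Sum>k<n. interaction_op a b s * dyson_term a b k s)"
    unfolding dyson_remainder_def right_diff_distrib sum_distrib_left
    by (intro integral_diff integrable_interaction_op_mult continuous_on_int_propagator integrable_sum
        continuous_on_dyson_term finite_lessThan)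
  also have "\<dots> = int_propagator a b t - 1 - (\<Sum>k<n. ?i (dyson_term a b k))"
    using integral_unique[OF int_propagator_has_integral[OF assms]]
    by (simp add: integral_sum integrable_interaction_op_mult continuous_on_dyson_term)
  also have "\<dots> = dyson_remainder a b (Suc n) t"
    unfolding dyson_remainder_def sum.lessThan_Suc_shift by simp
  finally show ?thesis ..
qed

lemma has_integral_power_0:
  assumes "0 \<le> t"
  shows "((\<lambda>s::real. s ^ n) has_integral (t ^ Suc n / Suc n)) {0..t}"
proof -
  have "((\<lambda>s::real. s ^ Suc n / Suc n) has_vector_derivative x ^ n) (at x within {0..t})" for x
  proof -
    have "DERIV (\<lambda>s::real. s ^ Suc n / Suc n) x :> x ^ n"
      by (intro derivative_eq_intros) auto
    then show ?thesis
      by (simp add: has_field_derivative_at_within has_real_derivative_iff_has_vector_derivative[symmetric])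
  qed
  from fundamental_theorem_of_calculus[OF assms this] show ?thesis by simp
qed

lemma norm_exp_scaleR_le:
  fixes x :: "'a::{real_normed_algebra_1,banach}"
  assumes "0 \<le> s" "s \<le> T"
  shows "norm (exp (s *\<^sub>R x)) \<le> exp (T * norm x)"
proof -
  have "norm (s *\<^sub>R x) \<le> T * norm x"
    using assms by (simp add: mult_right_mono)
  then show ?thesis using norm_exp[of "s *\<^sub>R x"] by (meson exp_le_cancel_iff order_trans)
qed

lemma norm_interaction_op_le:
  assumes "s \<in> {0..T}"
  shows "norm (interaction_op a b s) \<le> exp (T * norm a) * norm b * exp (T * norm a)"
proof -
  have "norm (interaction_op a b s) \<le> norm (exp (s *\<^sub>R (-a))) * norm b * norm (exp (s *\<^sub>R a))"
    unfolding interaction_op_def by (meson norm_mult_ineq mult_right_mono norm_ge_zero order_trans)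
  also have "\<dots> \<le> exp (T * norm a) * norm b * exp (T * norm a)"
    using assms norm_exp_scaleR_le[of s T "-a"] norm_exp_scaleR_le[of s T a] by (intro mult_mono) auto
  finally show ?thesis .
qed

lemma norm_int_propagator_le:
  assumes "s \<in> {0..T}"
  shows "norm (int_propagator a b s) \<le> exp (T * norm a) * exp (T * norm (a + b))"
proof -
  have "norm (int_propagator a b s) \<le> norm (exp (s *\<^sub>R (-a))) * norm (exp (s *\<^sub>R (a + b)))"
    unfolding int_propagator_def by (rule norm_mult_ineq)
  also have "\<dots> \<le> exp (T * norm a) * exp (T * norm (a + b))"
    using assms norm_exp_scaleR_le[of s T "-a"] norm_exp_scaleR_le[of s T "a + b"] by (intro mult_mono) auto
  finally show ?thesis .
qed

lemma norm_dyson_remainder_le: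
  fixes a b :: "'a::{real_normed_algebra_1,banach}" and T t :: real
  defines "C \<equiv> exp (T * norm a) * norm b * exp (T * norm a)"
    and "M \<equiv> exp (T * norm a) * exp (T * norm (a + b))"
  assumes "t \<in> {0..T}"
  shows "norm (dyson_remainder a b n t) \<le> M * C ^ n * t ^ n / fact n"
  using assms(3)
proof (induction n arbitrary: t)
  case 0
  then show ?case using norm_int_propagator_le[of t T a b] by (simp add: dyson_remainder_def M_def)
next
  case (Suc n)
  then have t0: "0 \<le> t" by simp
  have "norm (dyson_remainder a b (Suc n) t) = norm (integral {0..t} (\<lambda>s. interaction_op a b s * dyson_remainder a b n s))"
    by (simp only: dyson_remainder_Suc[OF t0])
  also have "\<dots> \<le> integral {0..t} (\<lambda>s. (C * (M * C ^ n / fact n)) * s ^ n)"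
  proof (rule integral_norm_bound_integral)
    fix s assume "s \<in> {0..t}"
    then have sT: "s \<in> {0..T}" using Suc.prems by auto
    have "norm (interaction_op a b s * dyson_remainder a b n s) \<le> norm (interaction_op a b s) * norm (dyson_remainder a b n s)"
      by (rule norm_mult_ineq)
    also have "\<dots> \<le> C * (M * C ^ n * s ^ n / fact n)"
      using norm_interaction_op_le[OF sT, of a b] Suc.IH[OF sT] unfolding C_def by (intro mult_mono) auto
    finally show "norm (interaction_op a b s * dyson_remainder a b n s) \<le> (C * (M * C ^ n / fact n)) * s ^ n"
      by simp
  qed (auto intro!: integrable_interaction_op_mult continuous_on_dyson_remainder
         integrable_continuous_interval continuous_intros continuous_on_interaction_op)
  also have "\<dots> = M * C ^ Suc n * t ^ Suc n / fact (Suc n)"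
    using integral_unique[OF has_integral_power_0[OF t0, of n]]
    by (simp add: field_simps del: of_nat_Suc)
  finally show ?case .
qed

theorem dyson_series_sums:
  fixes a b :: "'a::{real_normed_algebra_1,banach}"
  assumes "0 \<le> t"
  shows "(\<lambda>k. dyson_term a b k t) sums int_propagator a b t"
proof -
  define C where "C = exp (t * norm a) * norm b * exp (t * norm a)"
  define M where "M = exp (t * norm a) * exp (t * norm (a + b))"
  have "norm (dyson_remainder a b n t) \<le> M * ((C * t) ^ n / fact n)" for n
    using norm_dyson_remainder_le[of t t a b n] assms
    unfolding C_def M_def by (simp add: power_mult_distrib mult.assoc)
  moreover have "(\<lambda>n. M * ((C * t) ^ n / fact n)) \<longlonglongrightarrow> 0"
    using tendsto_mult_right_zero[OF summable_LIMSEQ_zero[OF summable_exp[of "C * t"]]]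
    by (simp add: inverse_eq_divide mult.commute)
  ultimately have "(\<lambda>n. dyson_remainder a b n t) \<longlonglongrightarrow> 0"
    by (rule Lim_null_comparison[OF always_eventually, OF allI])
  then have "(\<lambda>n. int_propagator a b t - dyson_remainder a b n t) \<longlonglongrightarrow> int_propagator a b t - 0"
    by (intro tendsto_diff tendsto_const)
  then show ?thesis unfolding sums_def dyson_remainder_def by simp
qed

fun dyson_integrand :: "'a::{real_normed_algebra_1,banach} \<Rightarrow> 'a \<Rightarrow> nat \<Rightarrow> (nat \<Rightarrow> real) \<Rightarrow> 'a" where
  "dyson_integrand a b 0 tau = 1"
| "dyson_integrand a b (Suc n) tau = dyson_integrand a b n tau * interaction_op a b (tau (Suc n))"

lemma dyson_integrand_upd: "n < j \<Longrightarrow> dyson_integrand a b n (tau(j := u)) = dyson_integrand a b n tau"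
  by (induction n) auto

lemma nint_dyson_integrand:
  fixes a b :: "'a::{real_normed_algebra_1,banach}" and psi :: "'a \<Rightarrow> complex"
  assumes psi: "bounded_linear psi"
  shows "1 \<le> j \<Longrightarrow> j + r = k + 1 \<Longrightarrow> 0 \<le> s \<Longrightarrow>
    nint r j s tau (\<lambda>tau. psi (dyson_integrand a b k tau)) = psi (dyson_integrand a b (j - 1) tau * dyson_term a b r s)"
proof (induction r arbitrary: j s tau)
  case 0
  then show ?case by simp
next
  case (Suc r)
  then obtain j' where j: "j = Suc j'" by (cases j) auto
  define P where "P = dyson_integrand a b (j - 1) tau"
  have "nint (Suc r) j s tau (\<lambda>tau. psi (dyson_integrand a b k tau))
      = integral {0..s} (\<lambda>u. psi (P * (interaction_op a b u * dyson_term a b r u)))"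
  proof (simp only: nint.simps, rule integral_cong)
    fix u assume "u \<in> {0..s}"
    then have "nint r (Suc j) u (tau(j := u)) (\<lambda>tau. psi (dyson_integrand a b k tau))
        = psi (dyson_integrand a b j (tau(j := u)) * dyson_term a b r u)"
      using Suc.prems Suc.IH[of "Suc j"] by auto
    also have "dyson_integrand a b j (tau(j := u)) = P * interaction_op a b u"
      unfolding P_def j by (simp add: dyson_integrand_upd)
    finally show "nint r (Suc j) u (tau(j := u)) (\<lambda>tau. psi (dyson_integrand a b k tau))
        = psi (P * (interaction_op a b u * dyson_term a b r u))" by (simp only: mult.assoc)
  qed
  also have "\<dots> = psi (P * dyson_term a b (Suc r) s)"
    using integral_linear[OF integrable_interaction_op_mult[OF continuous_on_dyson_term]
        bounded_linear_compose[OF psi bounded_linear_mult_right[of P]]]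
    by (simp add: o_def)
  finally show ?case unfolding P_def .
qed

section \<open>Superoperators and the free environment evolution\<close>

definition mtrace :: "'n::finite cmat \<Rightarrow> complex" where "mtrace X = (\<Sum>n\<in>UNIV. X n n)"

lemma mtrace_mmult_commute: "mtrace (mmult A B) = mtrace (mmult B (A::'n::finite cmat))"
  unfolding mtrace_def mmult_def by (subst sum.swap) (simp add: mult.commute)

lemma sum_UNIV_prod: "(\<Sum>p\<in>(UNIV::('a::finite \<times> 'b::finite) set). f p) = (\<Sum>a\<in>UNIV. \<Sum>b\<in>UNIV. f (a, b))"
  by (simp add: sum.cartesian_product)

text \<open>A superoperator on 'n cmat is stored as a matrix indexed by 'n \<times> 'n, so that superoperators
form a Banach algebra in which Liouvillians can be exponentiated.\<close>

definition sapply :: "('n::finite \<times> 'n) cmatrix \<Rightarrow> 'n cmat \<Rightarrow> 'n cmat" where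
  "sapply S X = (\<lambda>n m. \<Sum>p\<in>UNIV. entry S (n, m) p * X (fst p) (snd p))"

lemma sapply_mult: "sapply (S * T) X = sapply S (sapply T X)"
  unfolding sapply_def entry_mult mmult_def
  by (auto simp: sum_distrib_left sum_distrib_right mult.assoc intro!: ext sum.swap[THEN trans])

lemma sapply_one: "sapply 1 X = X"
proof (intro ext)
  fix n m
  have "sapply 1 X n m = (\<Sum>p\<in>UNIV. (if (n, m) = p then X (fst p) (snd p) else 0))"
    unfolding sapply_def entry_one mid_def by (intro sum.cong) auto
  also have "\<dots> = X n m" by (simp add: sum.delta)
  finally show "sapply 1 X n m = X n m" .
qed

lemma sapply_add: "sapply (S + T) X = (\<lambda>n m. sapply S X n m + sapply T X n m)"
  unfolding sapply_def by (simp add: distrib_right sum.distrib)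

lemma sapply_scaleR: "sapply (r *\<^sub>R S) X = (\<lambda>n m. r *\<^sub>R sapply S X n m)"
  unfolding sapply_def by (simp add: scaleR_sum_right)

definition unit_cmat :: "'n \<Rightarrow> 'n \<Rightarrow> 'n cmat" where
  "unit_cmat i j = (\<lambda>a b. if a = i \<and> b = j then 1 else 0)"

lemma sapply_unit: "sapply S (unit_cmat i j) n m = entry S (n, m) (i, j)"
proof -
  have "sapply S (unit_cmat i j) n m = (\<Sum>p\<in>UNIV. if p = (i, j) then entry S (n, m) p else 0)"
    unfolding sapply_def unit_cmat_def by (intro sum.cong) auto
  then show ?thesis by (simp add: sum.delta)
qed

lemma sapply_inj: "(\<And>X. sapply S X = sapply T X) \<Longrightarrow> S = T"
proof (rule cmatrix_eqI)
  fix p q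
  assume "\<And>X. sapply S X = sapply T X"
  then have "sapply S (unit_cmat (fst q) (snd q)) (fst p) (snd p) = sapply T (unit_cmat (fst q) (snd q)) (fst p) (snd p)" by simp
  then show "entry S p q = entry T p q" by (simp add: sapply_unit)
qed

definition sop_lmult :: "'n::finite cmatrix \<Rightarrow> ('n \<times> 'n) cmatrix" where
  "sop_lmult A = of_cmat (\<lambda>p q. entry A (fst p) (fst q) * (if snd p = snd q then 1 else 0))"

definition sop_rmult :: "'n::finite cmatrix \<Rightarrow> ('n \<times> 'n) cmatrix" where
  "sop_rmult B = of_cmat (\<lambda>p q. (if fst p = fst q then 1 else 0) * entry B (snd q) (snd p))"

lemma sapply_sop_lmult: "sapply (sop_lmult A) X = mmult (entry A) X"
proof (intro ext)
  fix n m
  have "sapply (sop_lmult A) X n m = (\<Sum>a\<in>UNIV. \<Sum>b\<in>UNIV. entry A n a * (if m = b then 1 else 0) * X a b)"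
    unfolding sapply_def sop_lmult_def by (simp add: sum_UNIV_prod)
  also have "\<dots> = (\<Sum>a\<in>UNIV. entry A n a * X a m)"
    by (intro sum.cong refl) (simp add: if_distrib[of "\<lambda>x. _ * x * _"] cong: if_cong)
  finally show "sapply (sop_lmult A) X n m = mmult (entry A) X n m" by (simp add: mmult_def)
qed

lemma sapply_sop_rmult: "sapply (sop_rmult B) X = mmult X (entry B)"
proof (intro ext)
  fix n m
  have "sapply (sop_rmult B) X n m = (\<Sum>a\<in>UNIV. \<Sum>b\<in>UNIV. (if n = a then 1 else 0) * entry B b m * X a b)"
    unfolding sapply_def sop_rmult_def by (simp add: sum_UNIV_prod)
  also have "\<dots> = (\<Sum>b\<in>UNIV. X n b * entry B b m)"
    by (simp add: if_distrib[of "\<lambda>x. x * _ * _"] cong: if_cong) (subst sum.swap, simp add: mult.commute)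
  finally show "sapply (sop_rmult B) X n m = mmult X (entry B) n m" by (simp add: mmult_def)
qed

lemma sop_lmult_mult: "sop_lmult (A * B) = sop_lmult A * sop_lmult B"
  by (rule sapply_inj) (simp add: sapply_mult sapply_sop_lmult entry_mult mmult_assoc)

lemma sop_rmult_mult: "sop_rmult (A * B) = sop_rmult B * sop_rmult A"
  by (rule sapply_inj) (simp add: sapply_mult sapply_sop_rmult entry_mult mmult_assoc)

lemma sop_lmult_one: "sop_lmult (1 :: 'n::finite cmatrix) = 1"
  by (rule sapply_inj) (simp add: sapply_one sapply_sop_lmult entry_one)

lemma sop_rmult_one: "sop_rmult (1 :: 'n::finite cmatrix) = 1"
  by (rule sapply_inj) (simp add: sapply_one sapply_sop_rmult entry_one)

lemma sop_lmult_rmult_commute: "sop_lmult A * sop_rmult B = sop_rmult B * sop_lmult A"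
  by (rule sapply_inj) (simp add: sapply_mult sapply_sop_rmult sapply_sop_lmult mmult_assoc)

lemma linear_sop_lmult: "linear sop_lmult"
  by (rule linearI; rule cmatrix_eqI) (simp_all add: sop_lmult_def algebra_simps)

lemma linear_sop_rmult: "linear sop_rmult"
  by (rule linearI; rule cmatrix_eqI) (simp_all add: sop_rmult_def algebra_simps)

lemma sop_lmult_power: "sop_lmult (x ^ n) = (sop_lmult x) ^ n"
  by (induction n) (simp_all add: sop_lmult_one sop_lmult_mult)

lemma sop_rmult_power: "sop_rmult (x ^ n) = (sop_rmult x) ^ n"
  by (induction n) (simp_all add: sop_rmult_one sop_rmult_mult power_Suc2 power_commutes)

lemma exp_sop_lmult: "exp (sop_lmult x) = sop_lmult (exp x)"
  by (rule bounded_linear_exp_hom[symmetric]) (simp_all add: linear_imp_bounded_linear_cmatrix linear_sop_lmult sop_lmult_power)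

lemma exp_sop_rmult: "exp (sop_rmult x) = sop_rmult (exp x)"
  by (rule bounded_linear_exp_hom[symmetric]) (simp_all add: linear_imp_bounded_linear_cmatrix linear_sop_rmult sop_rmult_power)

lemma sapply_exp_lmult_rmult:
  "sapply (exp (t *\<^sub>R (sop_lmult A + sop_rmult B))) X = mmult (mmult (entry (exp (t *\<^sub>R A))) X) (entry (exp (t *\<^sub>R B)))"
proof -
  have "t *\<^sub>R (sop_lmult A + sop_rmult B) = sop_lmult (t *\<^sub>R A) + sop_rmult (t *\<^sub>R B)"
    by (simp add: linear_scale[OF linear_sop_lmult] linear_scale[OF linear_sop_rmult] scaleR_add_right)
  moreover have "exp (sop_lmult (t *\<^sub>R A) + sop_rmult (t *\<^sub>R B)) = exp (sop_lmult (t *\<^sub>R A)) * exp (sop_rmult (t *\<^sub>R B))"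
    by (rule exp_add_commuting) (rule sop_lmult_rmult_commute)
  ultimately show ?thesis
    by (simp add: exp_sop_lmult exp_sop_rmult sapply_mult sapply_sop_lmult sapply_sop_rmult mmult_assoc)
qed

definition madjoint :: "'n::finite cmatrix \<Rightarrow> 'n cmatrix" where
  "madjoint x = of_cmat (\<lambda>i j. cnj (entry x j i))"

lemma linear_madjoint: "linear madjoint"
  by (rule linearI; rule cmatrix_eqI) (simp_all add: madjoint_def)

lemma madjoint_mult: "madjoint (x * y) = madjoint y * madjoint x"
  by (rule cmatrix_eqI) (simp add: madjoint_def entry_mult mmult_def mult.commute)

lemma madjoint_one: "madjoint (1 :: 'n::finite cmatrix) = 1"
  by (rule cmatrix_eqI) (simp add: madjoint_def entry_one mid_def)

lemma madjoint_power: "madjoint (x ^ n) = (madjoint x) ^ n"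
  by (induction n) (simp_all add: madjoint_one madjoint_mult power_Suc2 power_commutes)

lemma exp_madjoint: "madjoint (exp x) = exp (madjoint x)"
  by (rule bounded_linear_exp_hom) (simp_all add: linear_imp_bounded_linear_cmatrix linear_madjoint madjoint_power)

definition env_generator :: "'e::finite cmat \<Rightarrow> 'e cmatrix" where "env_generator HE = of_cmat (msmult (- \<i>) HE)"

lemma of_cmat_msmult_scale: "of_cmat (msmult (c * of_real s) A) = s *\<^sub>R of_cmat (msmult c (A::'e::finite cmat))"
  by (rule cmatrix_eqI) (simp only: entry_scaleR entry_of_cmat msmult_def, simp add: scaleR_conv_of_real)

lemma U_E_eq_exp: "U_E HE s = entry (exp (s *\<^sub>R env_generator HE))"
  unfolding U_E_def env_generator_def by (simp only: mexp_eq_exp of_cmat_msmult_scale)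

lemma exp_scaleR_add: "exp (a *\<^sub>R K) * exp (b *\<^sub>R K) = exp ((a + b) *\<^sub>R (K::'a::{real_normed_algebra_1,banach}))"
  using exp_add_commuting[of "a *\<^sub>R K" "b *\<^sub>R K"] by (simp add: scaleR_add_left)

lemma U_E_add: "mmult (U_E HE a) (U_E HE b) = U_E HE (a + b)"
  unfolding U_E_eq_exp entry_mult[symmetric] exp_scaleR_add ..

lemma U_E_zero: "U_E HE 0 = mid"
  unfolding U_E_eq_exp by (simp add: entry_one)

lemma madjoint_env_generator:
  assumes "hermitian HE"
  shows "madjoint (env_generator HE) = - env_generator HE"
proof (rule cmatrix_eqI)
  fix i j
  have "HE i j = cnj (HE j i)" using assms unfolding hermitian_def by blast
  then show "entry (madjoint (env_generator HE)) i j = entry (- env_generator HE) i j"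
    by (simp add: madjoint_def env_generator_def msmult_def)
qed

lemma cnj_U_E:
  assumes "hermitian HE"
  shows "cnj (U_E HE s m y) = U_E HE (-s) y m"
proof -
  have "cnj (U_E HE s m y) = entry (madjoint (exp (s *\<^sub>R env_generator HE))) y m"
    unfolding U_E_eq_exp by (simp add: madjoint_def)
  also have "madjoint (exp (s *\<^sub>R env_generator HE)) = exp ((-s) *\<^sub>R env_generator HE)"
    unfolding exp_madjoint linear_scale[OF linear_madjoint] madjoint_env_generator[OF assms] by simp
  finally show ?thesis unfolding U_E_eq_exp .
qed

lemma mexp_eq_U_E_neg: "mexp (msmult (\<i> * of_real s) HE) = U_E HE (-s)"
  unfolding U_E_def by simp

definition evolve :: "'e::finite cmat \<Rightarrow> real \<Rightarrow> 'e cmat \<Rightarrow> 'e cmat" where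
  "evolve HE s X = mmult (mmult (U_E HE s) X) (U_E HE (-s))"

lemma evolve_add: "evolve HE a (evolve HE b X) = evolve HE (a + b) X"
proof -
  have "evolve HE a (evolve HE b X) = mmult (mmult (mmult (U_E HE a) (U_E HE b)) X) (mmult (U_E HE (-b)) (U_E HE (-a)))"
    unfolding evolve_def by (simp add: mmult_assoc)
  then show ?thesis unfolding U_E_add evolve_def by (simp add: add.commute)
qed

lemma mtrace_evolve: "mtrace (evolve HE s X) = mtrace X"
proof -
  have "mtrace (evolve HE s X) = mtrace (mmult (mmult (U_E HE (-s)) (U_E HE s)) X)"
    unfolding evolve_def mtrace_mmult_commute[of "mmult (U_E HE s) X" "U_E HE (-s)"] by (simp only: mmult_assoc)
  then show ?thesis by (simp add: U_E_add U_E_zero)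
qed

lemma rhoE_t_evolve: "rhoE_t HE rhoE s = evolve HE s rhoE"
  unfolding rhoE_t_def evolve_def mexp_eq_U_E_neg ..

lemma evolve_entry: "evolve HE s X n m = (\<Sum>x\<in>UNIV. \<Sum>y\<in>UNIV. U_E HE s n x * X x y * U_E HE (-s) y m)"
  unfolding evolve_def mmult_def
  by (simp add: sum_distrib_right sum_distrib_left) (subst sum.swap, simp add: mult.assoc)

lemma evolve_scale: "evolve HE s (\<lambda>n m. c * X n m) = (\<lambda>n m. c * evolve HE s X n m)"
  unfolding evolve_def mmult_def by (simp add: sum_distrib_left sum_distrib_right mult_ac)

definition sop_free :: "'e::finite cmat \<Rightarrow> ('e \<times> 'e) cmatrix" where
  "sop_free HE = sop_lmult (env_generator HE) + sop_rmult (- env_generator HE)"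

lemma sapply_exp_sop_free: "sapply (exp (s *\<^sub>R sop_free HE)) X = evolve HE s X"
  unfolding sop_free_def sapply_exp_lmult_rmult evolve_def U_E_eq_exp by simp

definition hadamard :: "('e \<Rightarrow> 'e \<Rightarrow> complex) \<Rightarrow> 'e cmat \<Rightarrow> 'e cmat" where
  "hadamard w X = (\<lambda>n m. w n m * X n m)"

definition sop_hadamard :: "('e::finite \<Rightarrow> 'e \<Rightarrow> complex) \<Rightarrow> ('e \<times> 'e) cmatrix" where
  "sop_hadamard w = of_cmat (\<lambda>p q. if p = q then w (fst p) (snd p) else 0)"

lemma sapply_sop_hadamard: "sapply (sop_hadamard w) X = hadamard w X"
proof (intro ext)
  fix n m
  have "sapply (sop_hadamard w) X n m = (\<Sum>p\<in>UNIV. if p = (n, m) then w n m * X n m else 0)"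
    unfolding sapply_def sop_hadamard_def by (intro sum.cong) auto
  then show "sapply (sop_hadamard w) X n m = hadamard w X n m" by (simp add: hadamard_def)
qed

lemma sapply_interaction_op: "sapply (interaction_op (sop_free HE) (sop_hadamard w) s) X = evolve HE (-s) (hadamard w (evolve HE s X))"
proof -
  have "s *\<^sub>R (- sop_free HE) = (-s) *\<^sub>R sop_free HE" by simp
  then show ?thesis
    unfolding interaction_op_def by (simp only: sapply_mult sapply_exp_sop_free sapply_sop_hadamard)
qed

section \<open>Environment correlation functions\<close>

text \<open>env_corr HE k w tau X is the sum defining q_E^(k), taken over all index tuples instead of the
fibres of V_E, with a weight w l (n l) (m l) inserted at each time tau_l and an arbitrary matrix X in
place of rho_E(tau_k).  For Hermitian H_E it equals env_corr_rec, which alternately weights entrywise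
and evolves freely from tau_k back to tau_1, and finally takes the trace.\<close>

fun env_corr_rec :: "'e::finite cmat \<Rightarrow> nat \<Rightarrow> (nat \<Rightarrow> 'e \<Rightarrow> 'e \<Rightarrow> complex) \<Rightarrow> (nat \<Rightarrow> real) \<Rightarrow> 'e cmat \<Rightarrow> complex" where
  "env_corr_rec HE 0 w tau X = mtrace X"
| "env_corr_rec HE (Suc k) w tau X = env_corr_rec HE k w tau (evolve HE (tau k - tau (Suc k)) (hadamard (w (Suc k)) X))"

lemma env_corr_rec_scale: "env_corr_rec HE k w tau (\<lambda>n m. c * X n m) = c * env_corr_rec HE k w tau X"
proof (induction k arbitrary: X)
  case 0
  then show ?case by (simp add: mtrace_def sum_distrib_left)
next
  case (Suc k)
  have "hadamard (w (Suc k)) (\<lambda>n m. c * X n m) = (\<lambda>n m. c * hadamard (w (Suc k)) X n m)"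
    by (simp add: hadamard_def mult_ac)
  then show ?case by (simp add: evolve_scale Suc.IH)
qed

lemma env_corr_rec_scale_weights: "env_corr_rec HE k (\<lambda>l x y. c * w l x y) tau X = c ^ k * env_corr_rec HE k w tau X"
proof (induction k arbitrary: X)
  case 0
  then show ?case by simp
next
  case (Suc k)
  have "hadamard (\<lambda>x y. c * w (Suc k) x y) X = (\<lambda>n m. c * hadamard (w (Suc k)) X n m)"
    by (simp add: hadamard_def mult_ac)
  then show ?case by (simp add: evolve_scale Suc.IH env_corr_rec_scale)
qed

lemma mtrace_dyson_integrand:
  "mtrace (sapply (dyson_integrand (sop_free HE) (sop_hadamard w) k tau) X)
     = env_corr_rec HE k (\<lambda>_. w) tau (evolve HE (tau k) X)"
proof (induction k arbitrary: X)
  case 0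
  then show ?case by (simp add: sapply_one mtrace_evolve)
next
  case (Suc k)
  then show ?case by (simp add: sapply_mult sapply_interaction_op evolve_add)
qed

definition env_corr :: "'e::finite cmat \<Rightarrow> nat \<Rightarrow> (nat \<Rightarrow> 'e \<Rightarrow> 'e \<Rightarrow> complex) \<Rightarrow> (nat \<Rightarrow> real) \<Rightarrow> 'e cmat \<Rightarrow> complex" where
  "env_corr HE k w tau X = (\<Sum>n\<in>ktuples k UNIV. \<Sum>m\<in>ktuples k UNIV.
     (if n 1 = m 1 then 1 else 0) * (\<Prod>l\<in>{1..k}. w l (n l) (m l)) * X (n k) (m k)
     * (\<Prod>l\<in>{1..<k}. T_E HE (tau l - tau (Suc l)) (n l) (m l) (n (Suc l)) (m (Suc l))))"

lemma sum_ktuples_Suc: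
  "sum g (ktuples (Suc k) A) = (\<Sum>n\<in>ktuples k A. \<Sum>y\<in>A. g (n(Suc k := y)))"
proof -
  have eq: "ktuples (Suc k) A = (\<lambda>(y, g). g(Suc k := y)) ` (A \<times> ktuples k A)"
    unfolding ktuples_def by (simp add: atLeastAtMostSuc_conv PiE_insert_eq)
  have inj: "inj_on (\<lambda>(y, g). g(Suc k := y)) (A \<times> ktuples k A)"
    unfolding ktuples_def using inj_combinator[of "Suc k" "{1..k}" "\<lambda>_. A"] by simp
  have "sum g (ktuples (Suc k) A) = (\<Sum>p\<in>A \<times> ktuples k A. g ((\<lambda>(y, g). g(Suc k := y)) p))"
    unfolding eq by (simp add: sum.reindex[OF inj])
  also have "\<dots> = (\<Sum>y\<in>A. \<Sum>n\<in>ktuples k A. g (n(Suc k := y)))"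
    by (simp add: sum.cartesian_product case_prod_beta)
  also have "\<dots> = (\<Sum>n\<in>ktuples k A. \<Sum>y\<in>A. g (n(Suc k := y)))"
    by (rule sum.swap)
  finally show ?thesis .
qed

lemma ktuples_mem: "n \<in> ktuples k A \<Longrightarrow> l \<in> {1..k} \<Longrightarrow> n l \<in> A"
  unfolding ktuples_def by auto

lemma finite_ktuples: "finite A \<Longrightarrow> finite (ktuples k A)"
  unfolding ktuples_def by (intro finite_PiE) auto

lemma env_corr_1: "env_corr HE 1 w tau X = (\<Sum>x\<in>UNIV. w 1 x x * X x x)"
proof -
  have k1: "ktuples 1 (UNIV::'a set) = ktuples (Suc 0) UNIV" by simp
  have "env_corr HE 1 w tau X = (\<Sum>x\<in>UNIV. \<Sum>y\<in>UNIV. (if x = y then 1 else 0) * w 1 x y * X x y)"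
    unfolding env_corr_def k1 sum_ktuples_Suc by (simp add: ktuples_def sum_ktuples_Suc)
  also have "\<dots> = (\<Sum>x\<in>UNIV. w 1 x x * X x x)"
    by (intro sum.cong refl) (simp add: if_distrib[of "\<lambda>z. z * _ * _"] cong: if_cong)
  finally show ?thesis .
qed

lemma prod_atLeastAtMost_Suc_upd:
  "(\<Prod>l\<in>{1..Suc k}. g l ((n(Suc k := x)) l) ((m(Suc k := y)) l))
     = g (Suc k) x y * (\<Prod>l\<in>{1..k}. g l (n l) (m l))"
proof -
  have "(\<Prod>l\<in>{1..k}. g l ((n(Suc k := x)) l) ((m(Suc k := y)) l)) = (\<Prod>l\<in>{1..k}. g l (n l) (m l))"
    by (intro prod.cong) auto
  then show ?thesis by (simp add: atLeastAtMostSuc_conv)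
qed

lemma prod_chain_Suc_upd:
  assumes "1 \<le> k"
  shows "(\<Prod>l\<in>{1..<Suc k}. g l ((n(Suc k := x)) l) ((m(Suc k := y)) l)
                               ((n(Suc k := x)) (Suc l)) ((m(Suc k := y)) (Suc l)))
     = g k (n k) (m k) x y * (\<Prod>l\<in>{1..<k}. g l (n l) (m l) (n (Suc l)) (m (Suc l)))"
proof -
  have "(\<Prod>l\<in>{1..<k}. g l ((n(Suc k := x)) l) ((m(Suc k := y)) l) ((n(Suc k := x)) (Suc l)) ((m(Suc k := y)) (Suc l)))
      = (\<Prod>l\<in>{1..<k}. g l (n l) (m l) (n (Suc l)) (m (Suc l)))"
    by (intro prod.cong) auto
  moreover have "{1..<Suc k} = insert k {1..<k}" using assms by auto
  ultimately show ?thesis by simp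
qed

lemma env_corr_Suc:
  assumes herm: "hermitian HE" and k: "1 \<le> k"
  shows "env_corr HE (Suc k) w tau X
     = env_corr HE k w tau (evolve HE (tau k - tau (Suc k)) (hadamard (w (Suc k)) X))"
proof -
  define s where "s = tau k - tau (Suc k)"
  define P where "P n m = (if n 1 = m 1 then 1 else 0) * (\<Prod>l\<in>{1..k}. w l (n l) (m l))
      * (\<Prod>l\<in>{1..<k}. T_E HE (tau l - tau (Suc l)) (n l) (m l) (n (Suc l)) (m (Suc l)))" for n m
  define Q where "Q n m x y = w (Suc k) x y * X x y * (U_E HE s (n k) x * U_E HE (-s) y (m k))" for n m x y
  let ?kt = "ktuples k (UNIV::'a set)"
  have "T_E HE s (n k) (m k) x y = U_E HE s (n k) x * U_E HE (-s) y (m k)" for n m :: "nat \<Rightarrow> 'a" and x y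
    by (simp add: T_E_def cnj_U_E[OF herm])
  then have "env_corr HE (Suc k) w tau X = (\<Sum>n\<in>?kt. \<Sum>x\<in>UNIV. \<Sum>m\<in>?kt. \<Sum>y\<in>UNIV. P n m * Q n m x y)"
    unfolding env_corr_def sum_ktuples_Suc prod_atLeastAtMost_Suc_upd prod_chain_Suc_upd[OF k]
    using k by (simp add: P_def Q_def s_def mult_ac)
  also have "\<dots> = (\<Sum>n\<in>?kt. \<Sum>m\<in>?kt. P n m * (\<Sum>x\<in>UNIV. \<Sum>y\<in>UNIV. Q n m x y))"
    by (simp only: sum_distrib_left sum.swap[of _ UNIV ?kt])
  also have "\<dots> = env_corr HE k w tau (evolve HE s (hadamard (w (Suc k)) X))"
    unfolding env_corr_def
    by (intro sum.cong refl) (simp add: P_def Q_def evolve_entry hadamard_def sum_distrib_left mult_ac)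
  finally show ?thesis unfolding s_def .
qed

lemma env_corr_eq_rec:
  assumes herm: "hermitian HE" and "1 \<le> k"
  shows "env_corr HE k w tau X = env_corr_rec HE k w tau X"
  using \<open>1 \<le> k\<close>
proof (induction k arbitrary: X rule: nat_induct_at_least)
  case base
  have "env_corr_rec HE 1 w tau X = mtrace (hadamard (w 1) X)"
    by (simp add: mtrace_evolve)
  then show ?case by (simp add: env_corr_1[unfolded One_nat_def] mtrace_def hadamard_def)
next
  case (Suc k)
  then show ?case by (simp add: env_corr_Suc[OF herm])
qed

lemma env_corr_upd:
  fixes HE :: "'e::finite cmat"
  assumes l: "l \<in> {1..k}"
  shows "env_corr HE k (w(l := h)) tau X = (\<Sum>n\<in>ktuples k UNIV. \<Sum>m\<in>ktuples k UNIV. h (n l) (m l) *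
     ((if n 1 = m 1 then 1 else 0) * (\<Prod>i\<in>{1..k} - {l}. w i (n i) (m i)) * X (n k) (m k)
     * (\<Prod>i\<in>{1..<k}. T_E HE (tau i - tau (Suc i)) (n i) (m i) (n (Suc i)) (m (Suc i)))))"
proof -
  have "(\<Prod>i\<in>{1..k}. (w(l := h)) i (n i) (m i)) = h (n l) (m l) * (\<Prod>i\<in>{1..k} - {l}. w i (n i) (m i))" for n m :: "nat \<Rightarrow> 'e"
  proof -
    have "(\<Prod>i\<in>{1..k}. (w(l := h)) i (n i) (m i)) = (w(l := h)) l (n l) (m l) * (\<Prod>i\<in>{1..k} - {l}. (w(l := h)) i (n i) (m i))"
      by (rule prod.remove) (use l in auto)
    also have "(\<Prod>i\<in>{1..k} - {l}. (w(l := h)) i (n i) (m i)) = (\<Prod>i\<in>{1..k} - {l}. w i (n i) (m i))"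
      by (intro prod.cong) auto
    finally show ?thesis by simp
  qed
  then show ?thesis unfolding env_corr_def by (simp add: mult_ac)
qed

lemma sum_env_corr_upd:
  fixes HE :: "'e::finite cmat"
  assumes l: "l \<in> {1..k}"
  shows "(\<Sum>x\<in>S. env_corr HE k (w(l := g x)) tau X) = env_corr HE k (w(l := (\<lambda>a b. \<Sum>x\<in>S. g x a b))) tau X"
proof -
  let ?kt = "ktuples k (UNIV::'e set)"
  define R where "R n m = (if n 1 = m 1 then 1 else 0) * (\<Prod>i\<in>{1..k} - {l}. w i (n i) (m i)) * X (n k) (m k)
     * (\<Prod>i\<in>{1..<k}. T_E HE (tau i - tau (Suc i)) (n i) (m i) (n (Suc i)) (m (Suc i)))" for n m
  have "(\<Sum>x\<in>S. env_corr HE k (w(l := g x)) tau X) = (\<Sum>x\<in>S. \<Sum>n\<in>?kt. \<Sum>m\<in>?kt. g x (n l) (m l) * R n m)"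
    unfolding env_corr_upd[OF l] R_def ..
  also have "\<dots> = (\<Sum>n\<in>?kt. \<Sum>x\<in>S. \<Sum>m\<in>?kt. g x (n l) (m l) * R n m)"
    by (rule sum.swap)
  also have "\<dots> = (\<Sum>n\<in>?kt. \<Sum>m\<in>?kt. \<Sum>x\<in>S. g x (n l) (m l) * R n m)"
    by (rule sum.cong[OF refl], rule sum.swap)
  also have "\<dots> = (\<Sum>n\<in>?kt. \<Sum>m\<in>?kt. (\<Sum>x\<in>S. g x (n l) (m l)) * R n m)"
    by (simp only: sum_distrib_right)
  also have "\<dots> = env_corr HE k (w(l := (\<lambda>a b. \<Sum>x\<in>S. g x a b))) tau X"
    unfolding env_corr_upd[OF l] R_def ..
  finally show ?thesis .
qed

lemma env_corr_rec_cong: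
  "(\<And>i. i \<le> k \<Longrightarrow> tau' i = tau i) \<Longrightarrow> (\<And>i. 1 \<le> i \<Longrightarrow> i \<le> k \<Longrightarrow> w' i = w i)
    \<Longrightarrow> env_corr_rec HE k w' tau' X = env_corr_rec HE k w tau X"
proof (induction k arbitrary: X)
  case 0
  then show ?case by simp
next
  case (Suc k)
  have "env_corr_rec HE k w' tau' Y = env_corr_rec HE k w tau Y" for Y
    using Suc.prems by (intro Suc.IH) auto
  moreover have "tau' k = tau k" "tau' (Suc k) = tau (Suc k)" "w' (Suc k) = w (Suc k)"
    using Suc.prems by auto
  ultimately show ?case by simp
qed

lemma hadamard_one: "hadamard (\<lambda>a b. 1) X = X"
  by (simp add: hadamard_def)

lemma env_corr_rec_skip_inner:
  assumes l1: "1 \<le> l" and wl: "w l = (\<lambda>a b. 1)"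
  shows "env_corr_rec HE (Suc l + d) w tau X = env_corr_rec HE (l + d) (skip_idx l w) (skip_idx l tau) X"
proof (induction d arbitrary: X)
  case 0
  obtain l' where l': "l = Suc l'" using l1 by (cases l) auto
  have "env_corr_rec HE (Suc l + 0) w tau X = env_corr_rec HE l' w tau (evolve HE (tau l' - tau l) (hadamard (w l) (evolve HE (tau l - tau (Suc l)) (hadamard (w (Suc l)) X))))"
    by (simp add: l')
  also have "\<dots> = env_corr_rec HE l' w tau (evolve HE (tau l' - tau (Suc l)) (hadamard (w (Suc l)) X))"
    by (simp add: wl hadamard_one evolve_add)
  also have "\<dots> = env_corr_rec HE l' (skip_idx l w) (skip_idx l tau) (evolve HE (tau l' - tau (Suc l)) (hadamard (w (Suc l)) X))"
    by (rule env_corr_rec_cong[symmetric]) (auto simp: skip_idx_def l')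
  also have "\<dots> = env_corr_rec HE (l + 0) (skip_idx l w) (skip_idx l tau) X"
    by (simp add: l' skip_idx_def)
  finally show ?case .
next
  case (Suc d)
  have "env_corr_rec HE (Suc l + Suc d) w tau X
      = env_corr_rec HE (Suc l + d) w tau (evolve HE (tau (Suc (l + d)) - tau (Suc (Suc (l + d)))) (hadamard (w (Suc (Suc (l + d)))) X))"
    by simp
  also have "\<dots> = env_corr_rec HE (l + d) (skip_idx l w) (skip_idx l tau) (evolve HE (tau (Suc (l + d)) - tau (Suc (Suc (l + d)))) (hadamard (w (Suc (Suc (l + d)))) X))"
    by (rule Suc.IH)
  also have "\<dots> = env_corr_rec HE (l + Suc d) (skip_idx l w) (skip_idx l tau) X"
    by (simp add: skip_idx_def)
  finally show ?case .
qed

lemma env_corr_rec_skip_last: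
  assumes k1: "1 \<le> k" and wk: "w k = (\<lambda>a b. 1)"
  shows "env_corr_rec HE k w tau X = env_corr_rec HE (k - 1) (skip_idx k w) (skip_idx k tau) (evolve HE (tau (k - 1) - tau k) X)"
proof -
  obtain k' where k': "k = Suc k'" using k1 by (cases k) auto
  have "env_corr_rec HE k w tau X = env_corr_rec HE k' w tau (evolve HE (tau k' - tau k) X)"
    by (simp add: k' wk[unfolded k'] hadamard_one)
  also have "\<dots> = env_corr_rec HE k' (skip_idx k w) (skip_idx k tau) (evolve HE (tau k' - tau k) X)"
    by (rule env_corr_rec_cong[symmetric]) (auto simp: skip_idx_def k')
  finally show ?thesis by (simp add: k')
qed

lemma env_corr_rec_merge_unit_weight:
  assumes l: "l \<in> {1..k}" and wl: "w l = (\<lambda>a b. 1)"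
  shows "env_corr_rec HE k w tau (evolve HE (tau k) Y)
     = env_corr_rec HE (k - 1) (skip_idx l w) (skip_idx l tau) (evolve HE (skip_idx l tau (k - 1)) Y)"
proof (cases "l < k")
  case True
  then obtain d where kd: "k = Suc l + d" by (metis add_Suc less_iff_Suc_add)
  moreover have "skip_idx l tau (k - 1) = tau k" using kd by (simp add: skip_idx_def)
  ultimately show ?thesis using env_corr_rec_skip_inner[of l w] l wl by simp
next
  case False
  then have lk: "l = k" using l by simp
  have "evolve HE (tau (k - 1) - tau k) (evolve HE (tau k) Y) = evolve HE (tau (k - 1)) Y"
    by (simp add: evolve_add)
  moreover have "skip_idx k tau (k - 1) = tau (k - 1)" using l lk by (simp add: skip_idx_def)
  ultimately show ?thesis using env_corr_rec_skip_last[of k w] l wl unfolding lk by simp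
qed

section \<open>The functions F^(k) and f^(k) as correlation functions\<close>

definition value_tuple :: "('e \<Rightarrow> real) \<Rightarrow> nat \<Rightarrow> (nat \<Rightarrow> 'e) \<Rightarrow> nat \<Rightarrow> real" where
  "value_tuple v k n = restrict (\<lambda>l. v (n l)) {1..k}"

definition q_E_term :: "'e::finite cmat \<Rightarrow> 'e cmat \<Rightarrow> nat \<Rightarrow> (nat \<Rightarrow> real) \<Rightarrow> (nat \<Rightarrow> 'e) \<Rightarrow> (nat \<Rightarrow> 'e) \<Rightarrow> complex" where
  "q_E_term HE rhoE k tau n m = (if n 1 = m 1 then 1 else 0) * rhoE_t HE rhoE (tau k) (n k) (m k)
        * (\<Prod>l\<in>{1..<k}. T_E HE (tau l - tau (Suc l)) (n l) (m l) (n (Suc l)) (m (Suc l)))"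

lemma finite_Omega_V: "finite (Omega_V (v :: 'e::finite \<Rightarrow> real))"
  unfolding Omega_V_def by simp

lemma finite_Omega_VV: "finite (Omega_VV (v :: 'e::finite \<Rightarrow> real))"
  unfolding Omega_VV_def by (intro finite_image_set2) (simp_all add: finite_Omega_V)

lemma fibre_idx_eq:
  assumes "xi \<in> ktuples k A"
  shows "fibre_idx v k xi = {n \<in> ktuples k UNIV. value_tuple v k n = xi}"
proof -
  have "(\<forall>l\<in>{1..k}. v (n l) = xi l) \<longleftrightarrow> value_tuple v k n = xi" for n
  proof
    assume "\<forall>l\<in>{1..k}. v (n l) = xi l"
    then show "value_tuple v k n = xi" using assms unfolding value_tuple_def ktuples_def
      by (intro ext) (auto simp: PiE_def extensional_def)
  next
    assume "value_tuple v k n = xi"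
    then show "\<forall>l\<in>{1..k}. v (n l) = xi l" unfolding value_tuple_def by auto
  qed
  then show ?thesis unfolding fibre_idx_def by auto
qed

lemma value_tuple_in: "value_tuple v k ` ktuples k UNIV \<subseteq> ktuples k (Omega_V v)"
  unfolding value_tuple_def ktuples_def Omega_V_def by auto

lemma value_tuple_at: "l \<in> {1..k} \<Longrightarrow> value_tuple v k n l = v (n l)"
  unfolding value_tuple_def by simp

lemma sum_value_tuples:
  fixes HE rhoE :: "'e::finite cmat"
  shows "(\<Sum>xi\<in>ktuples k (Omega_V v). \<Sum>eta\<in>ktuples k (Omega_V v). Psi xi eta * q_E HE v rhoE k xi eta tau)
       = (\<Sum>n\<in>ktuples k UNIV. \<Sum>m\<in>ktuples k UNIV. Psi (value_tuple v k n) (value_tuple v k m) * q_E_term HE rhoE k tau n m)"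
proof -
  let ?A = "ktuples k (Omega_V v)" and ?kt = "ktuples k (UNIV :: 'e set)"
  let ?H = "\<lambda>n m. Psi (value_tuple v k n) (value_tuple v k m) * q_E_term HE rhoE k tau n m"
  have fA: "finite ?A" by (intro finite_ktuples finite_Omega_V)
  have fkt: "finite ?kt" by (intro finite_ktuples) simp
  have "(\<Sum>xi\<in>?A. \<Sum>eta\<in>?A. Psi xi eta * q_E HE v rhoE k xi eta tau)
      = (\<Sum>xi\<in>?A. \<Sum>eta\<in>?A. \<Sum>n\<in>{n \<in> ?kt. value_tuple v k n = xi}. \<Sum>m\<in>{m \<in> ?kt. value_tuple v k m = eta}. ?H n m)"
  proof (intro sum.cong refl)
    fix xi eta assume xi: "xi \<in> ?A" and eta: "eta \<in> ?A"
    have "Psi xi eta * q_E HE v rhoE k xi eta tau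
       = (\<Sum>n\<in>{n \<in> ?kt. value_tuple v k n = xi}. \<Sum>m\<in>{m \<in> ?kt. value_tuple v k m = eta}. Psi xi eta * q_E_term HE rhoE k tau n m)"
      unfolding q_E_def fibre_idx_eq[OF xi] fibre_idx_eq[OF eta] q_E_term_def by (simp add: sum_distrib_left mult_ac)
    also have "\<dots> = (\<Sum>n\<in>{n \<in> ?kt. value_tuple v k n = xi}. \<Sum>m\<in>{m \<in> ?kt. value_tuple v k m = eta}. ?H n m)"
      by (intro sum.cong refl) auto
    finally show "Psi xi eta * q_E HE v rhoE k xi eta tau
       = (\<Sum>n\<in>{n \<in> ?kt. value_tuple v k n = xi}. \<Sum>m\<in>{m \<in> ?kt. value_tuple v k m = eta}. ?H n m)" .
  qed
  also have "\<dots> = (\<Sum>xi\<in>?A. \<Sum>n\<in>{n \<in> ?kt. value_tuple v k n = xi}. \<Sum>eta\<in>?A. \<Sum>m\<in>{m \<in> ?kt. value_tuple v k m = eta}. ?H n m)"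
    by (rule sum.cong[OF refl], rule sum.swap)
  also have "\<dots> = (\<Sum>xi\<in>?A. \<Sum>n\<in>{n \<in> ?kt. value_tuple v k n = xi}. \<Sum>m\<in>?kt. ?H n m)"
    by (intro sum.cong refl sum.group fA fkt value_tuple_in)
  also have "\<dots> = (\<Sum>n\<in>?kt. \<Sum>m\<in>?kt. ?H n m)"
    by (intro sum.group fA fkt value_tuple_in)
  finally show ?thesis .
qed

lemma prod_indicator:
  "finite S \<Longrightarrow> (\<Prod>l\<in>S. if P l then 1 else 0 :: complex) = (if \<forall>l\<in>S. P l then 1 else 0)"
  by (induction S rule: finite_induct) auto

lemma sum_q_E_eq_env_corr:
  fixes HE rhoE :: "'e::finite cmat"
  assumes Psi: "\<And>n m. n 1 = m 1 \<Longrightarrow> Psi (value_tuple v k n) (value_tuple v k m) = (\<Prod>l\<in>{1..k}. w l (n l) (m l))"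
  shows "(\<Sum>xi\<in>ktuples k (Omega_V v). \<Sum>eta\<in>ktuples k (Omega_V v). Psi xi eta * q_E HE v rhoE k xi eta tau)
       = env_corr HE k w tau (rhoE_t HE rhoE (tau k))"
  unfolding sum_value_tuples env_corr_def q_E_term_def
  by (intro sum.cong refl) (simp add: Psi)

definition mean_weight :: "('e \<Rightarrow> real) \<Rightarrow> nat \<Rightarrow> 'e \<Rightarrow> 'e \<Rightarrow> complex" where
  "mean_weight v l x y = complex_of_real ((v x + v y) / 2)"

definition half_sum_weight :: "('e \<Rightarrow> real) \<Rightarrow> (nat \<Rightarrow> real) \<Rightarrow> nat \<Rightarrow> 'e \<Rightarrow> 'e \<Rightarrow> complex" where
  "half_sum_weight v phi l x y = (if 2 * phi l = v x + v y then 1 else 0)"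

lemma F_k_eq_env_corr:
  fixes HE rhoE :: "'e::finite cmat"
  assumes k: "1 \<le> k"
  shows "F_k HE v rhoE k tau = env_corr HE k (mean_weight v) tau (rhoE_t HE rhoE (tau k))"
proof -
  obtain k' where k': "k = Suc k'" using k by (cases k) auto
  show ?thesis
    unfolding k' F_k.simps
    by (intro sum_q_E_eq_env_corr) (auto simp: value_tuple_at of_real_prod mean_weight_def intro!: prod.cong)
qed

lemma f_k_eq_sum_ktuples:
  fixes HE rhoE :: "'e::finite cmat"
  shows "f_k HE v rhoE k phi tau = (\<Sum>xi\<in>ktuples k (Omega_V v). \<Sum>eta\<in>ktuples k (Omega_V v).
     (if \<forall>l\<in>{1..k}. 2 * phi l = xi l + eta l then (if xi 1 = eta 1 then 1 else 0) else 0) * q_E HE v rhoE k xi eta tau)"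
proof -
  let ?A = "ktuples k (Omega_V v)"
  let ?C = "\<lambda>xi eta. \<forall>l\<in>{1..k}. 2 * phi l = xi l + eta l"
  have fA: "finite ?A" by (intro finite_ktuples finite_Omega_V)
  have S: "{(xi, eta) \<in> ?A \<times> ?A. ?C xi eta} = {p \<in> ?A \<times> ?A. ?C (fst p) (snd p)}" by auto
  have "f_k HE v rhoE k phi tau
      = (\<Sum>p\<in>{p \<in> ?A \<times> ?A. ?C (fst p) (snd p)}. (if fst p 1 = snd p 1 then 1 else 0) * q_E HE v rhoE k (fst p) (snd p) tau)"
    unfolding f_k_def S by (simp add: case_prod_beta)
  also have "\<dots> = (\<Sum>p\<in>?A \<times> ?A. if ?C (fst p) (snd p) then (if fst p 1 = snd p 1 then 1 else 0) * q_E HE v rhoE k (fst p) (snd p) tau else 0)"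
    by (rule sum.inter_filter) (simp add: fA)
  also have "\<dots> = (\<Sum>xi\<in>?A. \<Sum>eta\<in>?A. (if ?C xi eta then (if xi 1 = eta 1 then 1 else 0) else 0) * q_E HE v rhoE k xi eta tau)"
    unfolding sum.cartesian_product' by (intro sum.cong refl) simp
  finally show ?thesis .
qed

lemma f_k_eq_env_corr:
  fixes HE rhoE :: "'e::finite cmat"
  assumes k: "1 \<le> k"
  shows "f_k HE v rhoE k phi tau = env_corr HE k (half_sum_weight v phi) tau (rhoE_t HE rhoE (tau k))"
proof -
  have "1 \<in> {1..k}" using k by simp
  then show ?thesis
    unfolding f_k_eq_sum_ktuples
    by (intro sum_q_E_eq_env_corr) (simp add: half_sum_weight_def prod_indicator value_tuple_at)
qed

lemma half_sum_tuple_in_ktuples: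
  assumes "xi \<in> ktuples k (Omega_V v)" "eta \<in> ktuples k (Omega_V v)"
  shows "restrict (\<lambda>l. (xi l + eta l) / 2) {1..k} \<in> ktuples k (Omega_VV v)"
  unfolding ktuples_def Omega_VV_def
proof (intro restrict_PiE_iff[THEN iffD2] ballI)
  fix l assume "l \<in> {1..k}"
  then have "xi l \<in> Omega_V v" "eta l \<in> Omega_V v" using assms ktuples_mem by blast+
  then show "(xi l + eta l) / 2 \<in> {(x + y) / 2 |x y. x \<in> Omega_V v \<and> y \<in> Omega_V v}" by blast
qed

lemma ktuples_half_sum_iff:
  fixes phi xi eta :: "nat \<Rightarrow> real"
  assumes "phi \<in> ktuples k A"
  shows "(\<forall>l\<in>{1..k}. 2 * phi l = xi l + eta l) \<longleftrightarrow> phi = restrict (\<lambda>l. (xi l + eta l) / 2) {1..k}"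
proof
  assume "\<forall>l\<in>{1..k}. 2 * phi l = xi l + eta l"
  moreover have "phi l = undefined" if "l \<notin> {1..k}" for l
    using assms that unfolding ktuples_def by (auto simp: PiE_def extensional_def)
  ultimately show "phi = restrict (\<lambda>l. (xi l + eta l) / 2) {1..k}"
    by (intro ext) (auto simp: restrict_def field_simps)
qed simp

lemma F_k_eq_sum_f_k:
  fixes HE rhoE :: "'e::finite cmat"
  assumes k: "1 \<le> k"
  shows "F_k HE v rhoE k tau =
    (\<Sum>phi\<in>ktuples k (Omega_VV v). complex_of_real (\<Prod>l\<in>{1..k}. phi l) * f_k HE v rhoE k phi tau)"
proof -
  obtain k' where k': "k = Suc k'" using k by (cases k) auto
  let ?A = "ktuples k (Omega_V v)" and ?P = "ktuples k (Omega_VV v)"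
  let ?mid = "\<lambda>xi eta. restrict (\<lambda>l. (xi l + eta l) / 2) {1..k}"
  let ?g = "\<lambda>phi xi eta. complex_of_real (\<Prod>l\<in>{1..k}. phi l) * (if xi 1 = eta 1 then 1 else 0) * q_E HE v rhoE k xi eta tau"
  have "complex_of_real (\<Prod>l\<in>{1..k}. phi l) * ((if \<forall>l\<in>{1..k}. 2 * phi l = xi l + eta l
           then (if xi 1 = eta 1 then 1 else 0) else 0) * q_E HE v rhoE k xi eta tau)
      = (if phi = ?mid xi eta then ?g phi xi eta else 0)" if "phi \<in> ?P" for phi xi eta
    using ktuples_half_sum_iff[OF that] by simp
  then have "(\<Sum>phi\<in>?P. complex_of_real (\<Prod>l\<in>{1..k}. phi l) * f_k HE v rhoE k phi tau)
      = (\<Sum>phi\<in>?P. \<Sum>xi\<in>?A. \<Sum>eta\<in>?A. if phi = ?mid xi eta then ?g phi xi eta else 0)"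
    unfolding f_k_eq_sum_ktuples sum_distrib_left by simp
  also have "\<dots> = (\<Sum>xi\<in>?A. \<Sum>eta\<in>?A. \<Sum>phi\<in>?P. if phi = ?mid xi eta then ?g phi xi eta else 0)"
    by (subst sum.swap, rule sum.cong[OF refl], rule sum.swap)
  also have "\<dots> = (\<Sum>xi\<in>?A. \<Sum>eta\<in>?A. ?g (?mid xi eta) xi eta)"
  proof (intro sum.cong refl)
    fix xi eta assume "xi \<in> ?A" "eta \<in> ?A"
    then have "?mid xi eta \<in> ?P" by (rule half_sum_tuple_in_ktuples)
    then show "(\<Sum>phi\<in>?P. if phi = ?mid xi eta then ?g phi xi eta else 0) = ?g (?mid xi eta) xi eta"
      by (simp add: sum.delta finite_ktuples finite_Omega_VV)
  qed
  also have "\<dots> = F_k HE v rhoE k tau"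
    unfolding k' F_k.simps by (intro sum.cong refl) (simp add: mult_ac)
  finally show ?thesis ..
qed

lemma half_sum_weight_upd:
  "half_sum_weight v (phi(l := x)) = (half_sum_weight v phi)(l := (\<lambda>a b. if 2 * x = v a + v b then 1 else 0))"
  unfolding half_sum_weight_def by (intro ext) auto

lemma sum_Omega_VV_half_sum_indicator:
  fixes v :: "'e::finite \<Rightarrow> real"
  shows "(\<Sum>x\<in>Omega_VV v. if 2 * x = v a + v b then 1 else 0 :: complex) = 1"
proof -
  have "(\<Sum>x\<in>Omega_VV v. if 2 * x = v a + v b then 1 else 0 :: complex)
      = (\<Sum>x\<in>Omega_VV v. if x = (v a + v b) / 2 then 1 else 0)"
    by (intro sum.cong refl) auto
  also have "\<dots> = 1"
  proof -
    have "(v a + v b) / 2 \<in> Omega_VV v" unfolding Omega_VV_def Omega_V_def by auto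
    then show ?thesis by (subst sum.delta[OF finite_Omega_VV]) simp
  qed
  finally show ?thesis .
qed

lemma f_k_marginal:
  fixes HE rhoE :: "'e::finite cmat"
  assumes herm: "hermitian HE" and k: "2 \<le> k" and l: "l \<in> {1..k}"
  shows "(\<Sum>x\<in>Omega_VV v. f_k HE v rhoE k (phi(l := x)) tau)
       = f_k HE v rhoE (k - 1) (skip_idx l phi) (skip_idx l tau)"
proof -
  define w where "w = (half_sum_weight v phi)(l := (\<lambda>a b. 1))"
  have k1: "1 \<le> k" "1 \<le> k - 1" using k by auto
  have "(\<Sum>x\<in>Omega_VV v. f_k HE v rhoE k (phi(l := x)) tau) = env_corr HE k w tau (rhoE_t HE rhoE (tau k))"
    unfolding f_k_eq_env_corr[OF k1(1)] half_sum_weight_upd sum_env_corr_upd[OF l]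
      sum_Omega_VV_half_sum_indicator w_def ..
  also have "\<dots> = env_corr_rec HE (k - 1) (skip_idx l w) (skip_idx l tau) (rhoE_t HE rhoE (skip_idx l tau (k - 1)))"
    unfolding env_corr_eq_rec[OF herm k1(1)] rhoE_t_evolve
    by (rule env_corr_rec_merge_unit_weight[OF l]) (simp add: w_def)
  also have "skip_idx l w = half_sum_weight v (skip_idx l phi)"
    unfolding w_def skip_idx_def half_sum_weight_def by (intro ext) auto
  finally show ?thesis
    unfolding f_k_eq_env_corr[OF k1(2)] env_corr_eq_rec[OF herm k1(2)] .
qed

section \<open>Pure dephasing of a qubit\<close>

definition half_sign :: "bool \<Rightarrow> complex" where "half_sign a = (if a then 1/2 else -1/2)"

definition branch_ham :: "('e \<Rightarrow> real) \<Rightarrow> 'e cmat \<Rightarrow> bool \<Rightarrow> 'e cmat" where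
  "branch_ham v HE a = madd (msmult (half_sign a) (diag_op v)) HE"

lemma VS_dephasing_entry: "msmult (1/2) sigma_z a c = (if a = c then half_sign a else 0)"
  unfolding msmult_def sigma_z_def half_sign_def by simp

lemma H_SE_dephasing_block:
  "msmult c (H_SE (\<lambda>a b. 0) (msmult (1/2) sigma_z) (diag_op v) HE) (a, x) (b, y)
     = (if a = b then msmult c (branch_ham v HE a) x y else 0)"
  unfolding H_SE_def madd_def tensor_def msmult_def branch_ham_def mid_def sigma_z_def half_sign_def
  by (auto simp: algebra_simps)

lemma mpow_block:
  fixes M :: "('a::finite \<times> 'e::finite) cmat"
  assumes M: "\<And>a x b y. M (a, x) (b, y) = (if a = b then B a x y else 0)"
  shows "mpow M n (a, x) (b, y) = (if a = b then mpow (B a) n x y else 0)"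
proof (induction n arbitrary: a x b y)
  case 0
  then show ?case by (simp add: mid_def)
next
  case (Suc n)
  have "mpow M (Suc n) (a, x) (b, y) = (\<Sum>c\<in>UNIV. \<Sum>z\<in>UNIV. M (a, x) (c, z) * mpow M n (c, z) (b, y))"
    by (simp add: mmult_def sum_UNIV_prod)
  also have "\<dots> = (\<Sum>c\<in>UNIV. \<Sum>z\<in>UNIV. if c = a then B a x z * (if a = b then mpow (B a) n z y else 0) else 0)"
    unfolding M Suc.IH by (intro sum.cong refl) auto
  also have "\<dots> = (\<Sum>z\<in>UNIV. B a x z * (if a = b then mpow (B a) n z y else 0))"
    by (subst sum.swap) (simp only: sum.delta finite UNIV_I if_True)
  also have "\<dots> = (if a = b then mpow (B a) (Suc n) x y else 0)"
    by (simp add: mmult_def)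
  finally show ?case .
qed

lemma mexp_block:
  fixes M :: "('a::finite \<times> 'e::finite) cmat"
  assumes M: "\<And>a x b y. M (a, x) (b, y) = (if a = b then B a x y else 0)"
  shows "mexp M (a, x) (b, y) = (if a = b then mexp (B a) x y else 0)"
  unfolding mexp_def mpow_block[OF M] by (cases "a = b") simp_all

lemma mexp_msmult_zero: "mexp (msmult c (\<lambda>a b. 0)) = (mid :: 'a::finite cmat)"
proof -
  have "of_cmat (msmult c (\<lambda>a b. 0)) = (0 :: 'a cmatrix)" by (rule cmatrix_eqI) (simp add: msmult_def)
  then show ?thesis by (simp add: mexp_eq_exp entry_one)
qed

lemma ptrace_E_block_conj:
  fixes E1 E2 :: "('a::finite \<times> 'e::finite) cmat"
  assumes E1: "\<And>a x b y. E1 (a, x) (b, y) = (if a = b then e1 a x y else 0)"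
    and E2: "\<And>a x b y. E2 (a, x) (b, y) = (if a = b then e2 a x y else 0)"
  shows "ptrace_E (mmult (mmult E1 (tensor R P)) E2) a b = R a b * mtrace (mmult (mmult (e1 a) P) (e2 b))"
proof -
  have left: "mmult E1 (tensor R P) (a, n) (d, w) = R a d * mmult (e1 a) P n w" for a n d w
  proof -
    have "mmult E1 (tensor R P) (a, n) (d, w) = (\<Sum>c\<in>UNIV. \<Sum>z\<in>UNIV. if c = a then e1 a n z * (R a d * P z w) else 0)"
      unfolding mmult_def sum_UNIV_prod E1 tensor_def by (intro sum.cong refl) auto
    then show ?thesis by (subst (asm) sum.swap) (simp add: sum.delta mmult_def sum_distrib_left mult_ac)
  qed
  have "mmult (mmult E1 (tensor R P)) E2 (a, n) (b, m) = R a b * mmult (mmult (e1 a) P) (e2 b) n m" for n m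
  proof -
    have "mmult (mmult E1 (tensor R P)) E2 (a, n) (b, m)
        = (\<Sum>d\<in>UNIV. \<Sum>w\<in>UNIV. if d = b then R a b * mmult (e1 a) P n w * e2 b w m else 0)"
      unfolding mmult_def[of "mmult E1 _" E2] sum_UNIV_prod left E2 by (intro sum.cong refl) auto
    then show ?thesis
      by (subst (asm) sum.swap) (simp add: sum.delta mmult_def[of "mmult (e1 a) P"] sum_distrib_left mult_ac)
  qed
  then show ?thesis unfolding ptrace_E_def mtrace_def by (simp add: sum_distrib_left)
qed

lemma reduced_state_entry:
  fixes rhoS :: "bool cmat" and HE rhoE :: "'e::finite cmat"
  shows "reduced_interaction_state (\<lambda>a b. 0) (msmult (1/2) sigma_z) (diag_op v) HE rhoS rhoE t a b
     = rhoS a b * mtrace (mmult (mmult (U_E (branch_ham v HE a) t) rhoE) (U_E (branch_ham v HE b) (-t)))"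
proof -
  let ?H = "H_SE (\<lambda>a b. 0) (msmult (1/2) sigma_z) (diag_op v) HE"
  have E1: "mexp (msmult (- \<i> * of_real t) ?H) (a, x) (b, y) = (if a = b then U_E (branch_ham v HE a) t x y else 0)"
    for a x b y
    unfolding U_E_def by (rule mexp_block[OF H_SE_dephasing_block])
  have E2: "mexp (msmult (\<i> * of_real t) ?H) (a, x) (b, y) = (if a = b then U_E (branch_ham v HE a) (-t) x y else 0)"
    for a x b y
    unfolding mexp_eq_U_E_neg[symmetric] by (rule mexp_block[OF H_SE_dephasing_block])
  have "reduced_interaction_state (\<lambda>a b. 0) (msmult (1/2) sigma_z) (diag_op v) HE rhoS rhoE t a b
      = ptrace_E (mmult (mmult (mexp (msmult (- \<i> * of_real t) ?H)) (tensor rhoS rhoE)) (mexp (msmult (\<i> * of_real t) ?H))) a b"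
    unfolding reduced_interaction_state_def Let_def mexp_msmult_zero by simp
  also have "\<dots> = rhoS a b * mtrace (mmult (mmult (U_E (branch_ham v HE a) t) rhoE) (U_E (branch_ham v HE b) (-t)))"
    by (rule ptrace_E_block_conj[OF E1 E2])
  finally show ?thesis .
qed

lemma VS_t_dephasing: "VS_t (\<lambda>a b. 0) VS s = VS"
  unfolding VS_t_def mexp_msmult_zero by simp

lemma calV_dephasing_entry: "calV (\<lambda>a b. 0) (msmult (1/2) sigma_z) s A a b = (half_sign a - half_sign b) * A a b"
proof -
  have l: "mmult (msmult (1/2) sigma_z) A a b = half_sign a * A a b"
    unfolding mmult_def VS_dephasing_entry by (simp add: if_distrib[of "\<lambda>x. x * _"] cong: if_cong)
  have r: "mmult A (msmult (1/2) sigma_z) a b = A a b * half_sign b"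
    unfolding mmult_def VS_dephasing_entry by (simp add: if_distrib[of "\<lambda>x. _ * x"] cong: if_cong)
  show ?thesis unfolding calV_def VS_t_dephasing mminus_def l r by (simp add: algebra_simps)
qed

lemma vcomp_dephasing_entry: "vcomp (\<lambda>a b. 0) (msmult (1/2) sigma_z) k tau A a b = (half_sign a - half_sign b) ^ k * A a b"
proof (induction k arbitrary: A)
  case 0
  then show ?case by simp
next
  case (Suc k)
  then show ?case by (simp add: calV_dephasing_entry)
qed

lemma nint_scale: "nint r j s tau (\<lambda>tau. c * g tau) = c * nint r j s tau g"
  by (induction r arbitrary: j s tau) simp_all

lemma nint_zero: "nint r j s tau (\<lambda>_. 0) = 0"
  by (induction r arbitrary: j s tau) simp_all

definition dephasing_weight :: "('e \<Rightarrow> real) \<Rightarrow> bool \<Rightarrow> bool \<Rightarrow> 'e \<Rightarrow> 'e \<Rightarrow> complex" where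
  "dephasing_weight v a b n m = - \<i> * (half_sign a * v n - half_sign b * v m)"

lemma branch_liouvillian_split:
  "sop_lmult (env_generator (branch_ham v HE a)) + sop_rmult (- env_generator (branch_ham v HE b))
     = sop_free HE + sop_hadamard (dephasing_weight v a b)"
proof (rule sapply_inj, intro ext)
  fix X n m
  have l: "mmult (entry (env_generator (branch_ham v HE a))) X n m
      = - \<i> * half_sign a * v n * X n m + mmult (entry (env_generator HE)) X n m"
  proof -
    have "mmult (entry (env_generator (branch_ham v HE a))) X n m
        = (\<Sum>z\<in>UNIV. (if z = n then - \<i> * half_sign a * v n * X n m else 0) + entry (env_generator HE) n z * X z m)"
      unfolding mmult_def env_generator_def branch_ham_def
      by (intro sum.cong refl) (auto simp: msmult_def madd_def diag_op_def algebra_simps)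
    then show ?thesis by (simp add: sum.distrib mmult_def)
  qed
  have r: "mmult X (entry (- env_generator (branch_ham v HE b))) n m
      = \<i> * half_sign b * v m * X n m + mmult X (entry (- env_generator HE)) n m"
  proof -
    have "mmult X (entry (- env_generator (branch_ham v HE b))) n m
        = (\<Sum>z\<in>UNIV. (if z = m then \<i> * half_sign b * v m * X n m else 0) + X n z * entry (- env_generator HE) z m)"
      unfolding mmult_def env_generator_def branch_ham_def
      by (intro sum.cong refl) (auto simp: msmult_def madd_def diag_op_def algebra_simps)
    then show ?thesis by (simp add: sum.distrib sum_subtractf sum_negf mmult_def)
  qed
  show "sapply (sop_lmult (env_generator (branch_ham v HE a)) + sop_rmult (- env_generator (branch_ham v HE b))) X n m
      = sapply (sop_free HE + sop_hadamard (dephasing_weight v a b)) X n m"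
    unfolding sapply_add sapply_sop_lmult sapply_sop_rmult sop_free_def sapply_sop_hadamard hadamard_def
      dephasing_weight_def l r
    by (simp add: algebra_simps)
qed

lemma linear_scaled_mtrace_sapply:
  fixes rhoE :: "'e::finite cmat"
  shows "linear (\<lambda>S. c * mtrace (sapply S rhoE))"
proof (rule linearI)
  fix S T :: "('e::finite \<times> 'e) cmatrix" and r :: real
  show "c * mtrace (sapply (S + T) rhoE) = c * mtrace (sapply S rhoE) + c * mtrace (sapply T rhoE)"
    unfolding sapply_add mtrace_def by (simp add: sum.distrib distrib_left)
  show "c * mtrace (sapply (r *\<^sub>R S) rhoE) = r *\<^sub>R (c * mtrace (sapply S rhoE))"
    unfolding sapply_scaleR mtrace_def by (simp add: scaleR_conv_of_real sum_distrib_left mult_ac)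
qed

lemma mtrace_branch_evolution:
  "mtrace (mmult (mmult (U_E (branch_ham v HE a) t) rhoE) (U_E (branch_ham v HE b) (-t)))
     = mtrace (sapply (int_propagator (sop_free HE) (sop_hadamard (dephasing_weight v a b)) t) rhoE)"
proof -
  let ?A = "sop_free HE" and ?B = "sop_hadamard (dephasing_weight v a b)"
  have "U_E (branch_ham v HE b) (-t) = entry (exp (t *\<^sub>R (- env_generator (branch_ham v HE b))))"
    unfolding U_E_eq_exp by simp
  then have "mmult (mmult (U_E (branch_ham v HE a) t) rhoE) (U_E (branch_ham v HE b) (-t))
      = sapply (exp (t *\<^sub>R (?A + ?B))) rhoE"
    unfolding branch_liouvillian_split[symmetric] sapply_exp_lmult_rmult U_E_eq_exp by simp
  also have "exp (t *\<^sub>R (?A + ?B)) = exp (t *\<^sub>R ?A) * int_propagator ?A ?B t"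
    unfolding int_propagator_def mult.assoc[symmetric] exp_scaleR_mult_exp_scaleR_minus by simp
  finally show ?thesis
    by (simp only: sapply_mult sapply_exp_sop_free mtrace_evolve)
qed

lemma mtrace_dyson_integrand_dephasing:
  fixes HE rhoE :: "'e::finite cmat"
  assumes herm: "hermitian HE" and tr: "mtrace rhoE = 1" and ab: "a \<noteq> b"
  shows "mtrace (sapply (dyson_integrand (sop_free HE) (sop_hadamard (dephasing_weight v a b)) k tau) rhoE)
     = (- \<i> * (half_sign a - half_sign b)) ^ k * F_k HE v rhoE k tau"
proof -
  have "half_sign b = - half_sign a" using ab unfolding half_sign_def by (cases a; cases b) auto
  then have weights: "(\<lambda>_::nat. dephasing_weight v a b) = (\<lambda>l x y. (- \<i> * (half_sign a - half_sign b)) * mean_weight v l x y)"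
    unfolding dephasing_weight_def mean_weight_def by (intro ext) (simp add: algebra_simps)
  have corr: "env_corr_rec HE k (mean_weight v) tau (evolve HE (tau k) rhoE) = F_k HE v rhoE k tau"
  proof (cases "k = 0")
    case True
    then show ?thesis by (simp add: mtrace_evolve tr)
  next
    case False
    then have "1 \<le> k" by simp
    then show ?thesis
      unfolding F_k_eq_env_corr[OF \<open>1 \<le> k\<close>] env_corr_eq_rec[OF herm \<open>1 \<le> k\<close>] rhoE_t_evolve by simp
  qed
  show ?thesis
    unfolding mtrace_dyson_integrand weights env_corr_rec_scale_weights corr ..
qed

lemma dyson_expansion_offdiag:
  fixes HE rhoE :: "'e::finite cmat" and rhoS :: "bool cmat"
  assumes herm: "hermitian HE" and tr: "mtrace rhoE = 1" and t: "0 \<le> t" and ab: "a \<noteq> b"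
  shows "(\<lambda>k. (- \<i>) ^ k * nint k 1 t (\<lambda>_. 0)
      (\<lambda>tau. F_k HE v rhoE k tau * vcomp (\<lambda>a b. 0) (msmult (1/2) sigma_z) k tau rhoS a b))
    sums (rhoS a b * mtrace (mmult (mmult (U_E (branch_ham v HE a) t) rhoE) (U_E (branch_ham v HE b) (-t))))"
proof -
  let ?A = "sop_free HE" and ?B = "sop_hadamard (dephasing_weight v a b)"
  define psi where "psi S = rhoS a b * mtrace (sapply S rhoE)" for S
  have psi: "bounded_linear psi"
    unfolding psi_def by (intro linear_imp_bounded_linear_cmatrix linear_scaled_mtrace_sapply)
  have "psi (dyson_term ?A ?B k t) = nint k 1 t (\<lambda>_. 0) (\<lambda>tau. psi (dyson_integrand ?A ?B k tau))" for k
    using nint_dyson_integrand[OF psi, of 1 k k t] t by simp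
  also have "\<dots>k = (- \<i>) ^ k * nint k 1 t (\<lambda>_. 0)
      (\<lambda>tau. F_k HE v rhoE k tau * vcomp (\<lambda>a b. 0) (msmult (1/2) sigma_z) k tau rhoS a b)" for k
    unfolding psi_def mtrace_dyson_integrand_dephasing[OF herm tr ab] vcomp_dephasing_entry
      nint_scale[symmetric] power_mult_distrib
    by (simp only: mult_ac)
  finally show ?thesis
    using bounded_linear.sums[OF psi dyson_series_sums[OF t, of ?A ?B]]
    by (simp add: psi_def mtrace_branch_evolution)
qed

lemma dyson_expansion_diag:
  fixes HE rhoE :: "'e::finite cmat" and rhoS :: "bool cmat"
  assumes tr: "mtrace rhoE = 1"
  shows "(\<lambda>k. (- \<i>) ^ k * nint k 1 t (\<lambda>_. 0)
      (\<lambda>tau. F_k HE v rhoE k tau * vcomp (\<lambda>a b. 0) (msmult (1/2) sigma_z) k tau rhoS a a))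
    sums (rhoS a a * mtrace (mmult (mmult (U_E (branch_ham v HE a) t) rhoE) (U_E (branch_ham v HE a) (-t))))"
proof -
  have "(\<lambda>k. (- \<i>) ^ k * nint k 1 t (\<lambda>_. 0)
      (\<lambda>tau. F_k HE v rhoE k tau * vcomp (\<lambda>a b. 0) (msmult (1/2) sigma_z) k tau rhoS a a))
      = (\<lambda>k. if k = 0 then rhoS a a else 0)"
  proof
    fix k
    show "(- \<i>) ^ k * nint k 1 t (\<lambda>_. 0) (\<lambda>tau. F_k HE v rhoE k tau
        * vcomp (\<lambda>a b. 0) (msmult (1/2) sigma_z) k tau rhoS a a) = (if k = 0 then rhoS a a else 0)"
      unfolding vcomp_dephasing_entry by (cases k) (simp_all add: nint_zero)
  qed
  moreover have "mtrace (mmult (mmult (U_E (branch_ham v HE a) t) rhoE) (U_E (branch_ham v HE a) (-t))) = 1"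
    using mtrace_evolve[of "branch_ham v HE a" t rhoE] tr unfolding evolve_def by simp
  ultimately show ?thesis using sums_single[of 0 "\<lambda>_. rhoS a a"] by simp
qed

theorem mainTheorem7:
  fixes HS VS rhoS :: "bool cmat"
    and HE rhoE :: "'e::finite cmat"
    and v :: "'e \<Rightarrow> real"
    and t :: real
  assumes HS: "HS = (\<lambda>a b. 0)"
    and VS: "VS = msmult (1/2) sigma_z"
    and rhoS: "density_matrix rhoS"
    and HE: "hermitian HE"
    and rhoE: "density_matrix rhoE"
    and t: "0 \<le> t"
  shows "(\<forall>a b. (\<lambda>k. (- \<i>) ^ k *
              nint k 1 t (\<lambda>_. 0) (\<lambda>tau. F_k HE v rhoE k tau * vcomp HS VS k tau rhoS a b))
            sums (reduced_interaction_state HS VS (diag_op v) HE rhoS rhoE t a b))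
    \<and> (\<forall>k tau. 1 \<le> k \<longrightarrow> time_ordered k tau \<longrightarrow>
          F_k HE v rhoE k tau =
            (\<Sum>phi\<in>ktuples k (Omega_VV v).
               complex_of_real (\<Prod>l\<in>{1..k}. phi l) * f_k HE v rhoE k phi tau))
    \<and> (\<forall>k l phi tau. 2 \<le> k \<longrightarrow> l \<in> {1..k} \<longrightarrow> time_ordered k tau \<longrightarrow>
          (\<Sum>x\<in>Omega_VV v. f_k HE v rhoE k (phi(l := x)) tau)
            = f_k HE v rhoE (k - 1) (skip_idx l phi) (skip_idx l tau))"
proof (intro conjI allI impI)
  have tr: "mtrace rhoE = 1" using rhoE unfolding density_matrix_def mtrace_def by blast
  fix a b
  show "(\<lambda>k. (- \<i>) ^ k * nint k 1 t (\<lambda>_. 0) (\<lambda>tau. F_k HE v rhoE k tau * vcomp HS VS k tau rhoS a b))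
      sums (reduced_interaction_state HS VS (diag_op v) HE rhoS rhoE t a b)"
    unfolding HS VS reduced_state_entry
    using dyson_expansion_diag[OF tr] dyson_expansion_offdiag[OF HE tr t] by (cases "a = b") auto
qed (simp_all add: F_k_eq_sum_f_k f_k_marginal[OF HE])

end
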